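(* For all integers $n,k\ge1$, no closed abstraction belongs to $\llbracket\sharp(\mathbb B^{n+k})\multimap(\sharp(\mathbb B^n)\times\sharp(\mathbb B^k))\rrbracket_\emptyset$; that is, the type $\sharp(\mathbb B^{n+k})\multimap(\sharp(\mathbb B^n)\times\sharp(\mathbb B^k))$ is uninhabited.
   Context: **Syntax.** Terms: $t ::= x \mid |0\rangle \mid |1\rangle \mid \mathsf{if}\ t\ \mathsf{then}\ \vec s\ \mathsf{else}\ \vec s \mid \lambda x.\vec t \mid t\,t \mid (t,t) \mid \mathsf{let}\ (x,y)=t\ \mathsf{in}\ \vec t$. Superpositions: $\vec t ::= t \mid \vec 0 \mid \alpha\cdot\vec t \mid \vec t+\vec t$, with $\alpha$ an algebraic complex number. Basis values: $v ::= |0\rangle\mid|1\rangle\mid\lambda x.\vec t\mid(v,v)$. Values are superpositions of basis values. **Equivalence.** Superpositions are taken modulo the vector-space congruence $\equiv$: $+$ is commutative and associative, $\vec0$ is neutral, $0\cdot\vec t\equiv\vec0$, $1\cdot\vec t\equiv\vec t$, $\alpha\cdot(\beta\cdot\vec t)\equiv\alpha\beta\cdot\vec t$, $\alpha\cdot\vec t+\beta\cdot\vec t\equiv(\alpha+\beta)\cdot\vec t$, and $\alpha\cdot(\vec t_1+\vec t_2)\equiv\alpha\cdot\vec t_1+\alpha\cdot\vec t_2$. **Linear extension.** Constructors are extended linearly in their evaluated positions: - $s(\sum_i\alpha_i t_i)\triangleq\sum_i\alpha_i\cdot s\,t_i$; - $(\sum_i\alpha_is_i,\sum_j\beta_jt_j)\triangleq\sum_{i,j}\alpha_i\beta_j\cdot(s_i,t_j)$;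 - $\mathsf{if}$ and $\mathsf{let}$ distribute over a superposed guard or scrutinee. **Reduction $\rightsquigarrow$ (call-by-value, on closed superpositions).** - $\mathsf{if}\ |0\rangle\ \mathsf{then}\ \vec s\ \mathsf{else}\ \vec t\rightsquigarrow\vec s$ and $\mathsf{if}\ |1\rangle\ \mathsf{then}\ \vec s\ \mathsf{else}\ \vec t\rightsquigarrow\vec t$. - $(\lambda x.\vec t)\,v\rightsquigarrow\vec t[v/x]$ for a basis value $v$. - $\mathsf{let}\ (x,y)=(v,w)\ \mathsf{in}\ \vec t\rightsquigarrow\vec t[v/x,w/y]$. - Congruence rules reduce, using the linear extension: inside the guard of $\mathsf{if}$; in the argument of an application; in the function position when the argument is a basis value; in the first component of a pair; in the second component when the first is a basis value; and in the scrutinee of $\mathsf{let}$. - A superposition in canonical form $\sum_i\alpha_it_i+\sum_j\beta_jv_j$ reduces to $\sum_i\alpha_is_i+\sum_j\beta_jv_j$ when each $t_i\rightsquigarrow s_i$. Canonical form means: the superposed terms are pairwise distinct and all coefficients are nonzero. - Reduction is closed under $\equiv$. $\rightsquigarrow^*$ denotes the reflexive transitive closure of $\rightsquigarrow$. **Inner product and unit values.** On closed values, $\langle\sum_i\alpha_iv_i\mid\sum_j\beta_jw_j\rangle=\sum_{i,j}\overline{\alpha_i}\beta_j\delta_{v_i,w_j}$, where $\delta$ is the Kronecker delta on basis values. Let $\mathcal S_1$ be the set of closed values $\vec v$ with $|\langle\vec v|\vec v\rangle|^2=1$. **Base and span.** $\mathrm{base}(\vec v)$ is the set of basis values occurring with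 nonzero coefficient in $\vec v$. For a set $S$ of closed values, $\flat S=\bigcup_{\vec v\in S}\mathrm{base}(\vec v)$, and $\mathsf{span}(S)$ is the set of finite linear combinations of elements of $S$. **Realizability.** $\vec t\Vdash S$ iff $\vec t\rightsquigarrow^*\vec v$ for some $\vec v\in S$ (up to $\equiv$). **Types.** $A ::= X\mid A\multimap A\mid A\Rightarrow A\mid A\times A\mid Q\mid\S A\mid\forall X.A$, where ground types are $Q ::= \mathbb B\mid\sharp Q\mid\S Q\mid Q\times Q$. **Unitary semantics** (for $\tau$ mapping type variables to subsets of $\mathcal S_1$): - $\llbracket X\rrbracket_\tau=\tau(X)$; - $\llbracket\mathbb B\rrbracket_\tau=\{|0\rangle,|1\rangle\}$; - $\llbracket\sharp A\rrbracket_\tau=\mathsf{span}(\llbracket A\rrbracket_\tau)\cap\mathcal S_1$; - $\llbracket\S A\rrbracket_\tau=\llbracket A\rrbracket_\tau$; - $\llbracket A\multimap B\rrbracket_\tau=\{\lambda x.\vec t:\forall\vec v\in\llbracket A\rrbracket_\tau,(\lambda x.\vec t)\vec v\Vdash\llbracket B\rrbracket_\tau\}$; - $\llbracket A\Rightarrow B\rrbracket_\tau=\{\lambda x.\vec t:\forall v\in\flat\llbracket A\rrbracket_\tau,(\lambda x.\vec t)v\Vdash\llbracket B\rrbracket_\tau\}$; - $\llbracket A\times B\rrbracket_\tau=\{(\vec v,\vec w):\vec v\in\llbracket A\rrbracket_\tau,\vec w\in\llbracket B\rrbracket_\tau\}$; - $\llbracket\forall X.A\rrbracket_\tau=\bigcap_{R\subseteq\mathcal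 S_1}\llbracket A\rrbracket_{\tau\cup\{X\mapsto R\}}$. **Qubit notation.** $\mathbb B^1=\mathbb B$ and $\mathbb B^{m+1}=\mathbb B\times\mathbb B^m$. For $0\le i<2^n$ with binary digits $i_1\dots i_n$, let $|i\rangle\triangleq(|i_1\rangle,(|i_2\rangle,\dots(|i_{n-1}\rangle,|i_n\rangle)\dots))$. *)

theory Defs
  imports Complex_Main "HOL-Computational_Algebra.Polynomial"
begin

section \<open>Syntax (de Bruijn indices; Lam binds one variable, Let binds two)\<close>

text \<open>In  Let t b  the body b sees index 1 = x (first component) and index 0 = y.\<close>

datatype tm =
    Var nat
  | Ket0
  | Ket1
  | If tm sp sp
  | Lam sp
  | App tm tm
  | Pair tm tm
  | Let tm sp
and sp =
    Zero
  | Tm tm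
  | Scal complex sp
  | Plus sp sp

primrec closed_tm :: "nat \<Rightarrow> tm \<Rightarrow> bool" and closed_sp :: "nat \<Rightarrow> sp \<Rightarrow> bool" where
  "closed_tm n (Var i) = (i < n)"
| "closed_tm n Ket0 = True"
| "closed_tm n Ket1 = True"
| "closed_tm n (If t s1 s2) = (closed_tm n t \<and> closed_sp n s1 \<and> closed_sp n s2)"
| "closed_tm n (Lam b) = closed_sp (Suc n) b"
| "closed_tm n (App s t) = (closed_tm n s \<and> closed_tm n t)"
| "closed_tm n (Pair s t) = (closed_tm n s \<and> closed_tm n t)"
| "closed_tm n (Let t b) = (closed_tm n t \<and> closed_sp (Suc (Suc n)) b)"
| "closed_sp n Zero = True"
| "closed_sp n (Tm t) = closed_tm n t"
| "closed_sp n (Scal a s) = closed_sp n s"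
| "closed_sp n (Plus s1 s2) = (closed_sp n s1 \<and> closed_sp n s2)"

primrec alg_tm :: "tm \<Rightarrow> bool" and alg_sp :: "sp \<Rightarrow> bool" where
  "alg_tm (Var i) = True"
| "alg_tm Ket0 = True"
| "alg_tm Ket1 = True"
| "alg_tm (If t s1 s2) = (alg_tm t \<and> alg_sp s1 \<and> alg_sp s2)"
| "alg_tm (Lam b) = alg_sp b"
| "alg_tm (App s t) = (alg_tm s \<and> alg_tm t)"
| "alg_tm (Pair s t) = (alg_tm s \<and> alg_tm t)"
| "alg_tm (Let t b) = (alg_tm t \<and> alg_sp b)"
| "alg_sp Zero = True"
| "alg_sp (Tm t) = alg_tm t"
| "alg_sp (Scal a s) = (algebraic a \<and> alg_sp s)"
| "alg_sp (Plus s1 s2) = (alg_sp s1 \<and> alg_sp s2)"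

text \<open>Substitution of a closed term v for index k.\<close>
primrec subst_tm :: "nat \<Rightarrow> tm \<Rightarrow> tm \<Rightarrow> tm" and subst_sp :: "nat \<Rightarrow> tm \<Rightarrow> sp \<Rightarrow> sp" where
  "subst_tm k v (Var i) = (if i = k then v else if k < i then Var (i - 1) else Var i)"
| "subst_tm k v Ket0 = Ket0"
| "subst_tm k v Ket1 = Ket1"
| "subst_tm k v (If t s1 s2) = If (subst_tm k v t) (subst_sp k v s1) (subst_sp k v s2)"
| "subst_tm k v (Lam b) = Lam (subst_sp (Suc k) v b)"
| "subst_tm k v (App s t) = App (subst_tm k v s) (subst_tm k v t)"
| "subst_tm k v (Pair s t) = Pair (subst_tm k v s) (subst_tm k v t)"
| "subst_tm k v (Let t b) = Let (subst_tm k v t) (subst_sp (Suc (Suc k)) v b)"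
| "subst_sp k v Zero = Zero"
| "subst_sp k v (Tm t) = Tm (subst_tm k v t)"
| "subst_sp k v (Scal a s) = Scal a (subst_sp k v s)"
| "subst_sp k v (Plus s1 s2) = Plus (subst_sp k v s1) (subst_sp k v s2)"

primrec basis :: "tm \<Rightarrow> bool" where
  "basis (Var i) = False"
| "basis Ket0 = True"
| "basis Ket1 = True"
| "basis (If t s1 s2) = False"
| "basis (Lam b) = True"
| "basis (App s t) = False"
| "basis (Pair s t) = (basis s \<and> basis t)"
| "basis (Let t b) = False"

primrec is_value :: "sp \<Rightarrow> bool" where
  "is_value Zero = True"
| "is_value (Tm t) = basis t"
| "is_value (Scal a s) = is_value s"
| "is_value (Plus s1 s2) = (is_value s1 \<and> is_value s2)"

primrec spmap :: "(tm \<Rightarrow> tm) \<Rightarrow> sp \<Rightarrow> sp" where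
  "spmap f Zero = Zero"
| "spmap f (Tm t) = Tm (f t)"
| "spmap f (Scal a s) = Scal a (spmap f s)"
| "spmap f (Plus s1 s2) = Plus (spmap f s1) (spmap f s2)"

definition sum_sp :: "sp list \<Rightarrow> sp" where
  "sum_sp xs = foldr Plus xs Zero"

primrec coefs :: "sp \<Rightarrow> (complex \<times> tm) list" where
  "coefs Zero = []"
| "coefs (Tm t) = [(1, t)]"
| "coefs (Scal a s) = map (\<lambda>(b, t). (a * b, t)) (coefs s)"
| "coefs (Plus s1 s2) = coefs s1 @ coefs s2"

inductive teq :: "tm \<Rightarrow> tm \<Rightarrow> bool" and speq :: "sp \<Rightarrow> sp \<Rightarrow> bool" where
  teq_refl: "teq t t"
| teq_sym: "teq t u \<Longrightarrow> teq u t"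
| teq_trans: "teq t u \<Longrightarrow> teq u w \<Longrightarrow> teq t w"
| teq_If: "teq t t' \<Longrightarrow> speq s1 s1' \<Longrightarrow> speq s2 s2' \<Longrightarrow> teq (If t s1 s2) (If t' s1' s2')"
| teq_Lam: "speq b b' \<Longrightarrow> teq (Lam b) (Lam b')"
| teq_App: "teq s s' \<Longrightarrow> teq t t' \<Longrightarrow> teq (App s t) (App s' t')"
| teq_Pair: "teq s s' \<Longrightarrow> teq t t' \<Longrightarrow> teq (Pair s t) (Pair s' t')"
| teq_Let: "teq t t' \<Longrightarrow> speq b b' \<Longrightarrow> teq (Let t b) (Let t' b')"
| speq_refl: "speq s s"
| speq_sym: "speq s u \<Longrightarrow> speq u s"
| speq_trans: "speq s u \<Longrightarrow> speq u w \<Longrightarrow> speq s w"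
| speq_Tm: "teq t t' \<Longrightarrow> speq (Tm t) (Tm t')"
| speq_Scal: "speq s s' \<Longrightarrow> speq (Scal a s) (Scal a s')"
| speq_Plus: "speq s1 s1' \<Longrightarrow> speq s2 s2' \<Longrightarrow> speq (Plus s1 s2) (Plus s1' s2')"
| speq_comm: "speq (Plus s1 s2) (Plus s2 s1)"
| speq_assoc: "speq (Plus (Plus s1 s2) s3) (Plus s1 (Plus s2 s3))"
| speq_zero: "speq (Plus Zero s) s"
| speq_scal0: "speq (Scal 0 s) Zero"
| speq_scal1: "speq (Scal 1 s) s"
| speq_scal_scal: "speq (Scal a (Scal b s)) (Scal (a * b) s)"
| speq_scal_add: "speq (Plus (Scal a s) (Scal b s)) (Scal (a + b) s)"
| speq_scal_distr: "speq (Scal a (Plus s1 s2)) (Plus (Scal a s1) (Scal a s2))"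

inductive tred :: "tm \<Rightarrow> sp \<Rightarrow> bool" where
  if0: "tred (If Ket0 s1 s2) s1"
| if1: "tred (If Ket1 s1 s2) s2"
| beta: "basis v \<Longrightarrow> closed_tm 0 v \<Longrightarrow> tred (App (Lam b) v) (subst_sp 0 v b)"
| letpair: "basis v \<Longrightarrow> basis w \<Longrightarrow> closed_tm 0 v \<Longrightarrow> closed_tm 0 w \<Longrightarrow>
      tred (Let (Pair v w) b) (subst_sp 0 v (subst_sp 0 w b))"
| cong_if: "tred t r \<Longrightarrow> tred (If t s1 s2) (spmap (\<lambda>t'. If t' s1 s2) r)"
| cong_arg: "tred t r \<Longrightarrow> tred (App s t) (spmap (App s) r)"
| cong_fun: "tred s r \<Longrightarrow> basis v \<Longrightarrow> tred (App s v) (spmap (\<lambda>s'. App s' v) r)"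
| cong_pair1: "tred t r \<Longrightarrow> tred (Pair t u) (spmap (\<lambda>t'. Pair t' u) r)"
| cong_pair2: "tred u r \<Longrightarrow> basis v \<Longrightarrow> tred (Pair v u) (spmap (Pair v) r)"
| cong_let: "tred t r \<Longrightarrow> tred (Let t b) (spmap (\<lambda>t'. Let t' b) r)"
| equiv_src: "teq t t' \<Longrightarrow> alg_tm t' \<Longrightarrow> tred t' r \<Longrightarrow> tred t r"
| equiv_tgt: "tred t r \<Longrightarrow> speq r r' \<Longrightarrow> alg_sp r' \<Longrightarrow> tred t r'"

inductive sred :: "sp \<Rightarrow> sp \<Rightarrow> bool" where
  canon: "ts \<noteq> [] \<Longrightarrow>
      (\<forall>(a, t, s) \<in> set ts. a \<noteq> 0 \<and> tred t s) \<Longrightarrow>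
      (\<forall>(b, v) \<in> set vs. b \<noteq> 0 \<and> basis v) \<Longrightarrow>
      L = map (\<lambda>(a, t, s). t) ts @ map snd vs \<Longrightarrow>
      (\<forall>i < length L. \<forall>j < length L. i \<noteq> j \<longrightarrow> \<not> teq (L ! i) (L ! j)) \<Longrightarrow>
      sred (sum_sp (map (\<lambda>(a, t, s). Scal a (Tm t)) ts @ map (\<lambda>(b, v). Scal b (Tm v)) vs))
           (sum_sp (map (\<lambda>(a, t, s). Scal a s) ts @ map (\<lambda>(b, v). Scal b (Tm v)) vs))"
| equiv: "speq s s' \<Longrightarrow> alg_sp s' \<Longrightarrow> sred s' r' \<Longrightarrow> speq r' r \<Longrightarrow> alg_sp r' \<Longrightarrow> sred s r"

abbreviation sreds :: "sp \<Rightarrow> sp \<Rightarrow> bool" where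
  "sreds \<equiv> sred\<^sup>*\<^sup>*"

definition ip :: "sp \<Rightarrow> sp \<Rightarrow> complex" where
  "ip u w = (\<Sum>(a, v) \<leftarrow> coefs u. \<Sum>(b, v') \<leftarrow> coefs w. cnj a * b * (if teq v v' then 1 else 0))"

definition S1 :: "sp set" where
  "S1 = {v. is_value v \<and> closed_sp 0 v \<and> alg_sp v \<and> (cmod (ip v v))\<^sup>2 = 1}"

definition base :: "sp \<Rightarrow> tm set" where
  "base v = {w. basis w \<and> closed_tm 0 w \<and> alg_tm w \<and> ip (Tm w) v \<noteq> 0}"

definition flat :: "sp set \<Rightarrow> tm set" where
  "flat S = (\<Union>v \<in> S. base v)"

inductive_set span :: "sp set \<Rightarrow> sp set" for S :: "sp set" where
  span_zero: "Zero \<in> span S"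
| span_gen: "v \<in> S \<Longrightarrow> Scal a v \<in> span S"
| span_plus: "u \<in> span S \<Longrightarrow> w \<in> span S \<Longrightarrow> Plus u w \<in> span S"

definition pairsp :: "sp \<Rightarrow> sp \<Rightarrow> sp" where
  "pairsp u w = sum_sp [Scal (a * b) (Tm (Pair v v')). (a, v) \<leftarrow> coefs u, (b, v') \<leftarrow> coefs w]"

definition realizes :: "sp \<Rightarrow> sp set \<Rightarrow> bool" (infix "\<turnstile>r" 50) where
  "s \<turnstile>r S \<longleftrightarrow> (\<exists>v v'. sreds s v \<and> speq v v' \<and> v' \<in> S)"

datatype ty =
    TVar nat
  | Lolli ty ty
  | Arrow ty ty
  | Prod ty ty
  | Bool
  | Sharp ty
  | Para ty
  | All nat ty

primrec sem :: "ty \<Rightarrow> (nat \<Rightarrow> sp set) \<Rightarrow> sp set" where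
  "sem (TVar X) \<tau> = \<tau> X"
| "sem Bool \<tau> = {Tm Ket0, Tm Ket1}"
| "sem (Sharp A) \<tau> = span (sem A \<tau>) \<inter> S1"
| "sem (Para A) \<tau> = sem A \<tau>"
| "sem (Lolli A B) \<tau> = {Tm (Lam b) | b. closed_tm 0 (Lam b) \<and> alg_tm (Lam b) \<and>
      (\<forall>v \<in> sem A \<tau>. spmap (App (Lam b)) v \<turnstile>r sem B \<tau>)}"
| "sem (Arrow A B) \<tau> = {Tm (Lam b) | b. closed_tm 0 (Lam b) \<and> alg_tm (Lam b) \<and>
      (\<forall>v \<in> flat (sem A \<tau>). Tm (App (Lam b) v) \<turnstile>r sem B \<tau>)}"
| "sem (Prod A B) \<tau> = {pairsp v w | v w. v \<in> sem A \<tau> \<and> w \<in> sem B \<tau>}"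
| "sem (All X A) \<tau> = (\<Inter>R \<in> {R. R \<subseteq> S1}. sem A (\<tau>(X := R)))"

text \<open>B^1 = B, B^(m+1) = B x B^m  (B^0 is not used; set to B arbitrarily).\<close>
fun Bn :: "nat \<Rightarrow> ty" where
  "Bn 0 = Bool"
| "Bn (Suc 0) = Bool"
| "Bn (Suc (Suc m)) = Prod Bool (Bn (Suc m))"

definition empty_env :: "nat \<Rightarrow> sp set" where
  "empty_env = (\<lambda>_. {})"

end

theory Submission
  imports Defs
begin

text \<open>Reduction is deterministic up to the congruence, so on amplitudes (coefficients of
  congruence classes of terms) reduction of superpositions is the iteration of a single linear
  map; in particular a term of the type acts linearly on its inputs. Write the output on a basis
  ket \<open>|t\<rangle>\<close> of \<open>\<bbbB>\<^sup>n\<^sup>+\<^sup>k\<close> as a product \<open>P\<^sub>t \<otimes> Q\<^sub>t\<close>. Feeding in \<open>3/5|t\<rangle> + \<beta>|t'\<rangle>\<close> with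
  \<open>\<beta> = 4/5\<close> and \<open>\<beta> = 4i/5\<close> forces \<open>\<langle>P\<^sub>t|P\<^sub>t\<^sub>'\<rangle>\<langle>Q\<^sub>t|Q\<^sub>t\<^sub>'\<rangle> = 0\<close>, and since the output is again
  a product, a \<open>2\<times>2\<close> minor vanishes: \<open>P\<^sub>t \<parallel> P\<^sub>t\<^sub>'\<close> or \<open>Q\<^sub>t \<parallel> Q\<^sub>t\<^sub>'\<close>. Both relations are
  equivalences and together they cover all pairs, so one of them is total; then the other
  factors form an orthonormal family of \<open>2\<^sup>n\<^sup>+\<^sup>k\<close> vectors in a space of dimension \<open>2\<^sup>k\<close> or
  \<open>2\<^sup>n\<close>, which is impossible.\<close>

section \<open>Amplitudes on congruence classes\<close>

lemma equivp_teq: "equivp teq"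
  by (intro equivpI reflpI sympI transpI) (blast intro: teq_refl teq_sym teq_trans)+

quotient_type tcls = tm / teq
  morphisms class_rep tcl
  by (rule equivp_teq)

lemmas tcl_eq_iff = tcls.abs_eq_iff

lemma tcl_class_rep: "tcl (class_rep X) = X"
  by (rule Quotient3_abs_rep[OF Quotient3_tcls])

lemma teq_class_rep_tcl: "teq (class_rep (tcl t)) t"
  using tcl_class_rep[of "tcl t"] by (simp add: tcl_eq_iff)

definition amp :: "sp \<Rightarrow> tcls \<Rightarrow> complex" where
  "amp s X = (\<Sum>(a, t)\<leftarrow>coefs s. if tcl t = X then a else 0)"

lemma sum_list_const_mult: "(\<Sum>x\<leftarrow>xs. a * f x) = (a::complex) * (\<Sum>x\<leftarrow>xs. f x)"
  by (induction xs) (auto simp: algebra_simps)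

lemma amp_Zero [simp]: "amp Zero X = 0"
  and amp_Tm [simp]: "amp (Tm t) X = (if tcl t = X then 1 else 0)"
  and amp_Scal [simp]: "amp (Scal a s) X = a * amp s X"
  and amp_Plus [simp]: "amp (Plus s1 s2) X = amp s1 X + amp s2 X"
  by (simp_all add: amp_def o_def case_prod_beta sum_list_const_mult[symmetric] if_distrib
      cong: if_cong)

lemma amp_sum_sp: "amp (sum_sp xs) X = (\<Sum>s\<leftarrow>xs. amp s X)"
  by (induction xs) (auto simp: sum_sp_def)

lemma coefs_sum_sp: "coefs (sum_sp xs) = concat (map coefs xs)"
  by (induction xs) (auto simp: sum_sp_def)

lemma speq_imp_amp_eq: "speq s s' \<Longrightarrow> amp s = amp s'"
proof -
  have "teq t u \<Longrightarrow> True" and "speq s s' \<Longrightarrow> amp s = amp s'" for t u s s'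
  proof (induction rule: teq_speq.inducts)
    case (speq_Tm t t')
    then show ?case by (auto intro!: ext simp: tcl_eq_iff[symmetric])
  qed (auto intro!: ext simp: algebra_simps)
  then show "speq s s' \<Longrightarrow> amp s = amp s'" by blast
qed

lemma amp_nonzero_imp_class: "amp s X \<noteq> 0 \<Longrightarrow> X \<in> tcl ` snd ` set (coefs s)"
proof -
  have nonzero_summand: "(\<Sum>x\<leftarrow>xs. f x) \<noteq> (0::complex) \<Longrightarrow> \<exists>x\<in>set xs. f x \<noteq> 0" for f xs
    by (induction xs) auto
  assume "amp s X \<noteq> 0"
  then obtain a t where "(a, t) \<in> set (coefs s)" "(if tcl t = X then a else 0) \<noteq> 0"
    unfolding amp_def by (auto dest!: nonzero_summand)
  then show ?thesis by (force split: if_splits)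
qed

lemma finite_amp_support: "finite {X. amp s X \<noteq> 0}"
  by (rule finite_subset[of _ "tcl ` snd ` set (coefs s)"]) (auto dest: amp_nonzero_imp_class)

lemma sum_coefs_by_class:
  fixes xs :: "(complex \<times> tm) list"
  assumes "finite A" "tcl ` snd ` set xs \<subseteq> A" "\<forall>t\<in>snd ` set xs. g t = G (tcl t)"
  shows "(\<Sum>(a, t)\<leftarrow>xs. a * g t) = (\<Sum>X\<in>A. (\<Sum>(a, t)\<leftarrow>xs. if tcl t = X then a else 0) * G X)"
  using assms(2,3)
proof (induction xs)
  case (Cons p xs)
  obtain a t where p: "p = (a, t)" by (cases p)
  have "tcl t \<in> A" using Cons.prems p by auto
  have "(\<Sum>X\<in>A. (if tcl t = X then a else 0) * G X) = (\<Sum>X\<in>A. if tcl t = X then a * G X else 0)"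
    by (rule sum.cong) auto
  also have "\<dots> = a * G (tcl t)"
    using assms(1) \<open>tcl t \<in> A\<close> by (simp add: sum.delta)
  finally have "(\<Sum>X\<in>A. (if tcl t = X then a else 0) * G X) = a * G (tcl t)" .
  then show ?case using Cons by (simp add: p distrib_right sum.distrib)
qed simp

lemma sum_coefs_eq_if_amp_eq:
  assumes "\<And>t u. teq t u \<Longrightarrow> g t = g u" and "amp r = amp r'"
  shows "(\<Sum>(a, t)\<leftarrow>coefs r. a * g t) = (\<Sum>(a, t)\<leftarrow>coefs r'. a * g t)"
proof -
  define A where "A = tcl ` snd ` set (coefs r) \<union> tcl ` snd ` set (coefs r')"
  define G where "G X = g (class_rep X)" for X
  have gG: "g t = G (tcl t)" for t
    using assms(1) teq_class_rep_tcl[of t] by (simp add: G_def)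
  have "(\<Sum>(a, t)\<leftarrow>coefs r. a * g t) = (\<Sum>X\<in>A. amp r X * G X)"
    unfolding amp_def by (rule sum_coefs_by_class) (auto simp: A_def gG)
  also have "\<dots> = (\<Sum>X\<in>A. amp r' X * G X)" by (simp add: assms(2))
  also have "\<dots> = (\<Sum>(a, t)\<leftarrow>coefs r'. a * g t)"
    unfolding amp_def by (rule sum_coefs_by_class[symmetric]) (auto simp: A_def gG)
  finally show ?thesis .
qed

lemma amp_as_coef_sum: "amp s X = (\<Sum>(a, t)\<leftarrow>coefs s. a * (if tcl t = X then 1 else 0))"
  unfolding amp_def by (intro arg_cong[where f=sum_list] map_cong) auto

lemma coefs_spmap: "coefs (spmap f r) = map (\<lambda>(a, t). (a, f t)) (coefs r)"
  by (induction r) (auto simp: o_def case_prod_beta)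

lemma amp_spmap: "amp (spmap f r) X = (\<Sum>(a, t)\<leftarrow>coefs r. a * (if tcl (f t) = X then 1 else 0))"
proof -
  have "(\<Sum>(a, t)\<leftarrow>map (\<lambda>(a, t). (a, f t)) xs. if tcl t = X then a else 0)
      = (\<Sum>(a, t)\<leftarrow>xs. a * (if tcl (f t) = X then 1 else 0))" for xs :: "(complex \<times> tm) list"
    by (induction xs) auto
  then show ?thesis unfolding amp_def coefs_spmap .
qed

lemma amp_spmap_cong:
  assumes "\<And>t u. teq t u \<Longrightarrow> teq (f t) (f' u)" and "amp r = amp r'"
  shows "amp (spmap f r) = amp (spmap f' r')"
proof
  fix X
  have f: "teq (f t) (f u)" if "teq t u" for t u
    using assms(1)[OF that] assms(1)[OF teq_refl[of u]] by (meson teq_sym teq_trans)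
  have "amp (spmap f r) X = (\<Sum>(a, t)\<leftarrow>coefs r'. a * (if tcl (f t) = X then 1 else 0))"
  proof (unfold amp_spmap, rule sum_coefs_eq_if_amp_eq)
    fix t u assume "teq t u"
    then have "tcl (f t) = tcl (f u)" using f by (simp add: tcl_eq_iff)
    then show "(if tcl (f t) = X then 1 else 0) = (if tcl (f u) = X then 1 else 0)" by simp
  qed (use assms(2) in simp)
  also have "\<dots> = amp (spmap f' r') X"
    unfolding amp_spmap using assms(1)[OF teq_refl] by (simp add: tcl_eq_iff[symmetric])
  finally show "amp (spmap f r) X = amp (spmap f' r') X" .
qed

fun same_head :: "tm \<Rightarrow> tm \<Rightarrow> bool" where
  "same_head (Var i) u = (u = Var i)"
| "same_head Ket0 u = (u = Ket0)"
| "same_head Ket1 u = (u = Ket1)"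
| "same_head (If t s1 s2) u = (\<exists>t' s1' s2'. u = If t' s1' s2' \<and> teq t t' \<and> speq s1 s1' \<and> speq s2 s2')"
| "same_head (Lam b) u = (\<exists>b'. u = Lam b' \<and> speq b b')"
| "same_head (App s t) u = (\<exists>s' t'. u = App s' t' \<and> teq s s' \<and> teq t t')"
| "same_head (Pair s t) u = (\<exists>s' t'. u = Pair s' t' \<and> teq s s' \<and> teq t t')"
| "same_head (Let t b) u = (\<exists>t' b'. u = Let t' b' \<and> teq t t' \<and> speq b b')"

lemma teq_imp_same_head: "teq t u \<Longrightarrow> same_head t u"
proof -
  have refl: "same_head t t" for t
    by (cases t) (auto intro: teq_refl speq_refl)
  have sym: "same_head t u \<Longrightarrow> same_head u t" for t u
    by (cases t) (auto intro: teq_sym speq_sym)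
  have trans: "same_head t u \<Longrightarrow> same_head u w \<Longrightarrow> same_head t w" for t u w
    by (cases t; auto; blast intro: teq_trans speq_trans)
  have "teq t u \<Longrightarrow> same_head t u" and "speq s s' \<Longrightarrow> True" for t u s s'
    by (induction rule: teq_speq.inducts) (auto intro: refl sym trans)
  then show "teq t u \<Longrightarrow> same_head t u" by blast
qed

lemma teq_basis_iff: "teq t u \<Longrightarrow> basis t = basis u"
proof -
  have "teq t u \<Longrightarrow> basis t = basis u" and "speq s s' \<Longrightarrow> True" for t u s s'
    by (induction rule: teq_speq.inducts) auto
  then show "teq t u \<Longrightarrow> basis t = basis u" by blast
qed

lemma teq_Ket0_eq: "teq Ket0 u \<Longrightarrow> u = Ket0"
  and teq_Ket1_eq: "teq Ket1 u \<Longrightarrow> u = Ket1"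
  by (auto dest: teq_imp_same_head)

lemma tcl_Pair_eq_iff: "tcl (Pair x y) = tcl (Pair x' y') \<longleftrightarrow> tcl x = tcl x' \<and> tcl y = tcl y'"
  using teq_imp_same_head[of "Pair x y" "Pair x' y'"] by (auto simp: tcl_eq_iff intro: teq_Pair)

section \<open>Reduction is linear on amplitudes\<close>

lemma subst_resp_speq:
  "teq t u \<Longrightarrow> \<forall>k. teq (subst_tm k v t) (subst_tm k v u)"
  "speq s s' \<Longrightarrow> \<forall>k. speq (subst_sp k v s) (subst_sp k v s')"
proof (induction rule: teq_speq.inducts)
  case (teq_sym t u) then show ?case by (blast intro: teq_speq.teq_sym)
next
  case (teq_trans t u w) then show ?case by (blast intro: teq_speq.teq_trans)
next
  case (speq_sym t u) then show ?case by (blast intro: teq_speq.speq_sym)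
next
  case (speq_trans t u w) then show ?case by (blast intro: teq_speq.speq_trans)
qed (simp_all add: teq_refl speq_refl teq_If teq_Lam teq_App teq_Pair teq_Let speq_Tm speq_Scal speq_Plus speq_comm speq_assoc
    speq_zero speq_scal0 speq_scal1 speq_scal_scal speq_scal_add speq_scal_distr)

lemma subst_resp_teq_value:
  "teq v v' \<Longrightarrow> \<forall>k. teq (subst_tm k v t) (subst_tm k v' t)"
  "teq v v' \<Longrightarrow> \<forall>k. speq (subst_sp k v s) (subst_sp k v' s)"
  by (induction t and s) (simp_all add: teq_refl speq_refl teq_If teq_Lam teq_App teq_Pair teq_Let speq_Tm speq_Scal speq_Plus)

lemma subst_sp_speq: "speq s s' \<Longrightarrow> teq v v' \<Longrightarrow> speq (subst_sp k v s) (subst_sp k v' s')"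
  using subst_resp_speq(2) subst_resp_teq_value(2) by (meson speq_trans)

text \<open>Reduction without the closure under the congruence. Dropping the closedness side conditions
  is harmless, as only the uniqueness of results is needed.\<close>

inductive std_red :: "tm \<Rightarrow> sp \<Rightarrow> bool" where
  std_if0: "std_red (If Ket0 s1 s2) s1"
| std_if1: "std_red (If Ket1 s1 s2) s2"
| std_beta: "basis v \<Longrightarrow> std_red (App (Lam b) v) (subst_sp 0 v b)"
| std_letpair: "basis v \<Longrightarrow> basis w \<Longrightarrow> std_red (Let (Pair v w) b) (subst_sp 0 v (subst_sp 0 w b))"
| std_cong_if: "std_red t r \<Longrightarrow> std_red (If t s1 s2) (spmap (\<lambda>t'. If t' s1 s2) r)"
| std_cong_arg: "std_red t r \<Longrightarrow> std_red (App s t) (spmap (App s) r)"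
| std_cong_fun: "std_red s r \<Longrightarrow> basis v \<Longrightarrow> std_red (App s v) (spmap (\<lambda>s'. App s' v) r)"
| std_cong_pair1: "std_red t r \<Longrightarrow> std_red (Pair t u) (spmap (\<lambda>t'. Pair t' u) r)"
| std_cong_pair2: "std_red u r \<Longrightarrow> basis v \<Longrightarrow> std_red (Pair v u) (spmap (Pair v) r)"
| std_cong_let: "std_red t r \<Longrightarrow> std_red (Let t b) (spmap (\<lambda>t'. Let t' b) r)"

lemma std_red_not_basis: "std_red t r \<Longrightarrow> \<not> basis t"
  by (induction rule: std_red.induct) auto

lemma tred_imp_std_red: "tred t r \<Longrightarrow> \<exists>t' r'. teq t t' \<and> std_red t' r' \<and> amp r' = amp r"
proof (induction rule: tred.induct)
  case (cong_if t r s1 s2)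
  then obtain t' r' where "teq t t'" "std_red t' r'" "amp r' = amp r" by blast
  then show ?case
    by (intro exI[of _ "If t' s1 s2"] exI[of _ "spmap (\<lambda>t'. If t' s1 s2) r'"])
      (auto intro!: teq_If teq_refl speq_refl std_red.intros amp_spmap_cong)
next
  case (cong_arg t r s)
  then obtain t' r' where "teq t t'" "std_red t' r'" "amp r' = amp r" by blast
  then show ?case
    by (intro exI[of _ "App s t'"] exI[of _ "spmap (App s) r'"])
      (auto intro!: teq_App teq_refl std_red.intros amp_spmap_cong)
next
  case (cong_fun s r v)
  then obtain s' r' where "teq s s'" "std_red s' r'" "amp r' = amp r" by blast
  then show ?case using cong_fun.hyps
    by (intro exI[of _ "App s' v"] exI[of _ "spmap (\<lambda>s''. App s'' v) r'"])
      (auto intro!: teq_App teq_refl std_red.intros amp_spmap_cong)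
next
  case (cong_pair1 t r u)
  then obtain t' r' where "teq t t'" "std_red t' r'" "amp r' = amp r" by blast
  then show ?case
    by (intro exI[of _ "Pair t' u"] exI[of _ "spmap (\<lambda>t'. Pair t' u) r'"])
      (auto intro!: teq_Pair teq_refl std_red.intros amp_spmap_cong)
next
  case (cong_pair2 u r v)
  then obtain u' r' where "teq u u'" "std_red u' r'" "amp r' = amp r" by blast
  then show ?case using cong_pair2.hyps
    by (intro exI[of _ "Pair v u'"] exI[of _ "spmap (Pair v) r'"])
      (auto intro!: teq_Pair teq_refl std_red.intros amp_spmap_cong)
next
  case (cong_let t r b)
  then obtain t' r' where "teq t t'" "std_red t' r'" "amp r' = amp r" by blast
  then show ?case
    by (intro exI[of _ "Let t' b"] exI[of _ "spmap (\<lambda>t'. Let t' b) r'"])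
      (auto intro!: teq_Let teq_refl speq_refl std_red.intros amp_spmap_cong)
next
  case (equiv_src t t' r)
  then show ?case by (meson teq_trans)
next
  case (equiv_tgt t r r')
  then show ?case using speq_imp_amp_eq by metis
qed (blast intro: teq_refl std_red.intros)+

text \<open>Redexes and evaluation contexts are determined by the head constructors and whether
  subterms are basis values, all of which the congruence preserves.\<close>

lemma std_red_amp_unique: "std_red t r \<Longrightarrow> std_red t' r' \<Longrightarrow> teq t t' \<Longrightarrow> amp r = amp r'"
proof (induction arbitrary: t' r' rule: std_red.induct)
  case (std_if0 s1 s2)
  from teq_imp_same_head[OF std_if0(2)] obtain g s1' s2'
    where h: "t' = If g s1' s2'" "g = Ket0" "speq s1 s1'" by (auto dest: teq_Ket0_eq)
  from std_if0(1)[unfolded h] show ?case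
    by (cases rule: std_red.cases)
      (use h speq_imp_amp_eq std_red_not_basis[of Ket0] std_red_not_basis[of Ket1] in auto)
next
  case (std_if1 s1 s2)
  from teq_imp_same_head[OF std_if1(2)] obtain g s1' s2'
    where h: "t' = If g s1' s2'" "g = Ket1" "speq s2 s2'" by (auto dest: teq_Ket1_eq)
  from std_if1(1)[unfolded h] show ?case
    by (cases rule: std_red.cases)
      (use h speq_imp_amp_eq std_red_not_basis[of Ket0] std_red_not_basis[of Ket1] in auto)
next
  case (std_beta v b)
  from teq_imp_same_head[OF std_beta(3)] obtain f v'
    where fv: "t' = App f v'" "teq (Lam b) f" "teq v v'" by auto
  from teq_imp_same_head[OF fv(2)] obtain b' where "f = Lam b'" "speq b b'" by auto
  with fv have h: "t' = App (Lam b') v'" "speq b b'" "teq v v'" by simp_all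
  have "basis v'" using std_beta(1) h(3) teq_basis_iff by blast
  from std_beta(2)[unfolded h] show ?case
  proof (cases rule: std_red.cases)
    case std_beta
    then show ?thesis using h speq_imp_amp_eq subst_sp_speq by auto
  qed (use \<open>basis v'\<close> std_red_not_basis std_red_not_basis[of "Lam b'"] in auto)
next
  case (std_letpair v w b)
  from teq_imp_same_head[OF std_letpair(4)] obtain p b'
    where pb: "t' = Let p b'" "teq (Pair v w) p" "speq b b'" by auto
  from teq_imp_same_head[OF pb(2)] obtain v' w' where "p = Pair v' w'" "teq v v'" "teq w w'" by auto
  with pb have h: "t' = Let (Pair v' w') b'" "teq v v'" "teq w w'" "speq b b'" by simp_all
  have "basis (Pair v' w')" using std_letpair(1,2) h teq_basis_iff by auto
  from std_letpair(3)[unfolded h] show ?case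
  proof (cases rule: std_red.cases)
    case std_letpair
    then show ?thesis using h speq_imp_amp_eq subst_sp_speq by auto
  qed (use \<open>basis (Pair v' w')\<close> std_red_not_basis[of "Pair v' w'"] in auto)
next
  case (std_cong_if t r s1 s2)
  from teq_imp_same_head[OF std_cong_if(4)] obtain g s1' s2'
    where h: "t' = If g s1' s2'" "teq t g" "speq s1 s1'" "speq s2 s2'" by auto
  have "\<not> basis g" using std_red_not_basis[OF std_cong_if(1)] h(2) teq_basis_iff by blast
  from std_cong_if(3)[unfolded h] show ?case
  proof (cases rule: std_red.cases)
    case (std_cong_if r0)
    then show ?thesis using std_cong_if.IH h
      by (auto intro!: amp_spmap_cong teq_If)
  qed (use \<open>\<not> basis g\<close> in auto)
next
  case (std_cong_arg t r s)
  from teq_imp_same_head[OF std_cong_arg(4)] obtain s' u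
    where h: "t' = App s' u" "teq s s'" "teq t u" by auto
  have "\<not> basis u" using std_red_not_basis[OF std_cong_arg(1)] h(3) teq_basis_iff by blast
  from std_cong_arg(3)[unfolded h] show ?case
  proof (cases rule: std_red.cases)
    case (std_cong_arg r0)
    then show ?thesis using std_cong_arg.IH h
      by (auto intro!: amp_spmap_cong teq_App)
  qed (use \<open>\<not> basis u\<close> std_red_not_basis in auto)
next
  case (std_cong_fun s r v)
  from teq_imp_same_head[OF std_cong_fun(5)] obtain s' u
    where h: "t' = App s' u" "teq s s'" "teq v u" by auto
  have "\<not> basis s'" using std_red_not_basis[OF std_cong_fun(1)] h(2) teq_basis_iff by blast
  have "basis u" using std_cong_fun(2) h(3) teq_basis_iff by blast
  from std_cong_fun(4)[unfolded h] show ?case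
  proof (cases rule: std_red.cases)
    case (std_cong_fun r0)
    then show ?thesis using std_cong_fun.IH h
      by (auto intro!: amp_spmap_cong teq_App)
  qed (use \<open>\<not> basis s'\<close> \<open>basis u\<close> std_red_not_basis in auto)
next
  case (std_cong_pair1 t r u)
  from teq_imp_same_head[OF std_cong_pair1(4)] obtain t0 u0
    where h: "t' = Pair t0 u0" "teq t t0" "teq u u0" by auto
  have "\<not> basis t0" using std_red_not_basis[OF std_cong_pair1(1)] h(2) teq_basis_iff by blast
  from std_cong_pair1(3)[unfolded h] show ?case
  proof (cases rule: std_red.cases)
    case (std_cong_pair1 r0)
    then show ?thesis using std_cong_pair1.IH h
      by (auto intro!: amp_spmap_cong teq_Pair)
  qed (use \<open>\<not> basis t0\<close> in auto)
next
  case (std_cong_pair2 u r v)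
  from teq_imp_same_head[OF std_cong_pair2(5)] obtain v0 u0
    where h: "t' = Pair v0 u0" "teq v v0" "teq u u0" by auto
  have "\<not> basis u0" using std_red_not_basis[OF std_cong_pair2(1)] h(3) teq_basis_iff by blast
  have "basis v0" using std_cong_pair2(2) h(2) teq_basis_iff by blast
  from std_cong_pair2(4)[unfolded h] show ?case
  proof (cases rule: std_red.cases)
    case (std_cong_pair2 r0)
    then show ?thesis using std_cong_pair2.IH h
      by (auto intro!: amp_spmap_cong teq_Pair)
  qed (use \<open>\<not> basis u0\<close> \<open>basis v0\<close> std_red_not_basis in auto)
next
  case (std_cong_let t r b)
  from teq_imp_same_head[OF std_cong_let(4)] obtain t0 b0
    where h: "t' = Let t0 b0" "teq t t0" "speq b b0" by auto
  have "\<not> basis t0" using std_red_not_basis[OF std_cong_let(1)] h(2) teq_basis_iff by blast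
  from std_cong_let(3)[unfolded h] show ?case
  proof (cases rule: std_red.cases)
    case (std_cong_let r0)
    then show ?thesis using std_cong_let.IH h
      by (auto intro!: amp_spmap_cong teq_Let)
  qed (use \<open>\<not> basis t0\<close> in auto)
qed

lemma tred_amp_unique: "tred t r \<Longrightarrow> tred t' r' \<Longrightarrow> teq t t' \<Longrightarrow> amp r = amp r'"
proof -
  assume red: "tred t r" "tred t' r'" and "teq t t'"
  obtain t1 r1 where 1: "teq t t1" "std_red t1 r1" "amp r1 = amp r"
    using tred_imp_std_red[OF red(1)] by blast
  obtain t2 r2 where 2: "teq t' t2" "std_red t2 r2" "amp r2 = amp r'"
    using tred_imp_std_red[OF red(2)] by blast
  have "teq t1 t2" using 1(1) 2(1) \<open>teq t t'\<close> by (meson teq_sym teq_trans)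
  then show ?thesis using std_red_amp_unique[OF 1(2) 2(2)] 1(3) 2(3) by simp
qed

lemma tred_not_basis: "tred t r \<Longrightarrow> \<not> basis t"
  using tred_imp_std_red std_red_not_basis teq_basis_iff by blast

text \<open>The choice of reduct is harmless: reducts of congruent terms have the same amplitudes.\<close>

definition class_step :: "tcls \<Rightarrow> sp" where
  "class_step X = (if basis (class_rep X) then Tm (class_rep X)
     else if \<exists>t r. tcl t = X \<and> tred t r then (SOME r. \<exists>t. tcl t = X \<and> tred t r) else Zero)"

lemma amp_class_step_basis: "basis t \<Longrightarrow> amp (class_step (tcl t)) = amp (Tm t)"
  using teq_class_rep_tcl[of t] by (auto simp: class_step_def tcl_class_rep teq_basis_iff)

lemma amp_class_step_tred:
  assumes "tred t r"
  shows "amp (class_step (tcl t)) = amp r"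
proof -
  have "\<not> basis (class_rep (tcl t))"
    using tred_not_basis[OF assms] teq_class_rep_tcl[of t] teq_basis_iff by blast
  moreover have ex: "\<exists>r t'. tcl t' = tcl t \<and> tred t' r" using assms by blast
  ultimately have "class_step (tcl t) = (SOME r. \<exists>t'. tcl t' = tcl t \<and> tred t' r)"
    unfolding class_step_def by auto
  moreover obtain t0 where "tcl t0 = tcl t" "tred t0 (SOME r. \<exists>t'. tcl t' = tcl t \<and> tred t' r)"
    using someI_ex[OF ex] by blast
  ultimately show ?thesis using tred_amp_unique assms by (metis tcl_eq_iff)
qed

definition lin_step :: "sp \<Rightarrow> sp" where
  "lin_step s = sum_sp (map (\<lambda>(a, t). Scal a (class_step (tcl t))) (coefs s))"

lemma amp_lin_step: "amp (lin_step s) X = (\<Sum>(a, t)\<leftarrow>coefs s. a * amp (class_step (tcl t)) X)"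
proof -
  have "(\<Sum>s\<leftarrow>map (\<lambda>(a, t). Scal a (class_step (tcl t))) xs. amp s X)
      = (\<Sum>(a, t)\<leftarrow>xs. a * amp (class_step (tcl t)) X)" for xs
    by (induction xs) auto
  then show ?thesis unfolding lin_step_def amp_sum_sp .
qed

lemma lin_step_resp_amp: "amp s = amp s' \<Longrightarrow> amp (lin_step s) = amp (lin_step s')"
  unfolding amp_lin_step by (intro ext sum_coefs_eq_if_amp_eq) (auto simp: tcl_eq_iff[symmetric])

lemma amp_lin_step_Plus: "amp (lin_step (Plus s1 s2)) X = amp (lin_step s1) X + amp (lin_step s2) X"
  unfolding amp_lin_step by simp

lemma amp_lin_step_Scal: "amp (lin_step (Scal a s)) X = a * amp (lin_step s) X"
proof -
  have "(\<Sum>(b, t)\<leftarrow>map (\<lambda>(b, t). (a * b, t)) xs. b * g t) = a * (\<Sum>(b, t)\<leftarrow>xs. b * g t)"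
    for xs :: "(complex \<times> tm) list" and g
    by (induction xs) (auto simp: algebra_simps)
  then show ?thesis unfolding amp_lin_step coefs.simps .
qed

lemma amp_lin_step_sum_sp: "amp (lin_step (sum_sp xs)) X = (\<Sum>s\<leftarrow>xs. amp (lin_step s) X)"
  by (induction xs) (auto simp: sum_sp_def amp_lin_step_Plus amp_lin_step)

lemma sred_amp_lin_step: "sred s s' \<Longrightarrow> amp s' = amp (lin_step s)"
proof (induction rule: sred.induct)
  case (canon ts vs L)
  have redexes: "(\<Sum>s\<leftarrow>map (\<lambda>(a, t, s). Scal a s) ts. amp s X)
      = (\<Sum>s\<leftarrow>map (\<lambda>(a, t, s). Scal a (Tm t)) ts. amp (lin_step s) X)" for X
    using canon(2)
    by (intro arg_cong[where f=sum_list]) (auto simp: amp_lin_step_Scal amp_lin_step amp_class_step_tred)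
  have basis_values: "(\<Sum>s\<leftarrow>map (\<lambda>(b, v). Scal b (Tm v)) vs. amp s X)
      = (\<Sum>s\<leftarrow>map (\<lambda>(b, v). Scal b (Tm v)) vs. amp (lin_step s) X)" for X
    using canon(3)
    by (intro arg_cong[where f=sum_list]) (auto simp: amp_lin_step_Scal amp_lin_step amp_class_step_basis)
  show ?case
    unfolding amp_lin_step_sum_sp amp_sum_sp map_append sum_list_append
    using redexes basis_values by (intro ext) simp
next
  case (equiv s s' r' r)
  then show ?case using speq_imp_amp_eq lin_step_resp_amp by metis
qed

lemma funpow_lin_step_resp_amp: "amp s = amp s' \<Longrightarrow> amp ((lin_step ^^ m) s) = amp ((lin_step ^^ m) s')"
  by (induction m) (auto intro: lin_step_resp_amp)

lemma sreds_amp_lin_step: "sreds s w \<Longrightarrow> \<exists>m. amp w = amp ((lin_step ^^ m) s)"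
proof (induction rule: rtranclp_induct)
  case base
  show ?case by (rule exI[of _ 0]) simp
next
  case (step w w')
  then obtain m where "amp w = amp ((lin_step ^^ m) s)" by blast
  then have "amp (lin_step w) = amp (lin_step ((lin_step ^^ m) s))" by (rule lin_step_resp_amp)
  then show ?case using sred_amp_lin_step[OF step(2)] by (intro exI[of _ "Suc m"]) simp
qed

lemma amp_funpow_lin_step_lincomb:
  "amp ((lin_step ^^ m) (Plus (Scal a s1) (Scal b s2))) X
     = a * amp ((lin_step ^^ m) s1) X + b * amp ((lin_step ^^ m) s2) X"
proof (induction m arbitrary: X)
  case (Suc m)
  have "amp ((lin_step ^^ m) (Plus (Scal a s1) (Scal b s2)))
      = amp (Plus (Scal a ((lin_step ^^ m) s1)) (Scal b ((lin_step ^^ m) s2)))"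
    using Suc by (intro ext) simp
  then show ?case
    by (auto dest: lin_step_resp_amp simp: amp_lin_step_Plus amp_lin_step_Scal)
qed simp

definition basis_coefs :: "sp \<Rightarrow> bool" where
  "basis_coefs v \<longleftrightarrow> (\<forall>(a, t)\<in>set (coefs v). basis t)"

lemma value_basis_coefs: "is_value v \<Longrightarrow> basis_coefs v"
  unfolding basis_coefs_def by (induction v) auto

lemma funpow_lin_step_fixes_basis_coefs:
  assumes "basis_coefs v" "amp s = amp v"
  shows "amp ((lin_step ^^ m) s) = amp v"
proof (induction m)
  case (Suc m)
  have "amp (lin_step v) = amp v"
  proof
    fix X
    have "amp (lin_step v) X = (\<Sum>(a, t)\<leftarrow>coefs v. a * amp (class_step (tcl t)) X)"
      by (rule amp_lin_step)
    also have "\<dots> = (\<Sum>(a, t)\<leftarrow>coefs v. a * (if tcl t = X then 1 else 0))"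
      using assms(1) unfolding basis_coefs_def
      by (intro arg_cong[where f=sum_list] map_cong) (auto simp: amp_class_step_basis)
    finally show "amp (lin_step v) X = amp v X" by (simp add: amp_as_coef_sum)
  qed
  then show ?case using lin_step_resp_amp[OF Suc] by simp
qed (simp add: assms(2))

lemma funpow_lin_step_stable:
  assumes "amp ((lin_step ^^ m) s) = amp v" "basis_coefs v" "m \<le> M"
  shows "amp ((lin_step ^^ M) s) = amp v"
proof -
  have "(lin_step ^^ M) s = (lin_step ^^ (M - m)) ((lin_step ^^ m) s)"
    using assms(3) by (metis funpow_add le_add_diff_inverse2 o_apply)
  then show ?thesis using funpow_lin_step_fixes_basis_coefs[OF assms(2,1)] by simp
qed

lemma ip_eq_sum_coefs_amp: "ip u w = (\<Sum>(a, v)\<leftarrow>coefs u. cnj a * amp w (tcl v))"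
  unfolding ip_def
proof (intro arg_cong[where f=sum_list] map_cong refl)
  fix p assume "p \<in> set (coefs u)"
  obtain a v where p: "p = (a, v)" by (cases p)
  have "(\<Sum>(b, v')\<leftarrow>coefs w. cnj a * b * (if teq v v' then 1 else 0))
      = (\<Sum>x\<leftarrow>coefs w. cnj a * (\<lambda>(b, v'). if tcl v' = tcl v then b else 0) x)"
    by (intro arg_cong[where f=sum_list] map_cong refl) (auto simp: tcl_eq_iff teq_sym)
  also have "\<dots> = cnj a * amp w (tcl v)" by (simp add: sum_list_const_mult amp_def)
  finally show "(case p of (a, v) \<Rightarrow> \<Sum>(b, v')\<leftarrow>coefs w. cnj a * b * (if teq v v' then 1 else 0))
      = (case p of (a, v) \<Rightarrow> cnj a * amp w (tcl v))" by (simp add: p)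
qed

lemma ip_eq_sum_amp:
  assumes "finite A" "\<And>X. amp u X \<noteq> 0 \<Longrightarrow> X \<in> A"
  shows "ip u w = (\<Sum>X\<in>A. cnj (amp u X) * amp w X)"
proof -
  define A0 where "A0 = tcl ` snd ` set (coefs u)"
  have "finite A0" by (simp add: A0_def)
  have cnj_sum: "cnj (\<Sum>(a, v)\<leftarrow>xs. a * g v) = (\<Sum>(a, v)\<leftarrow>xs. cnj a * cnj (g v))" for xs g
    by (induction xs) auto
  have "ip u w = cnj (\<Sum>(a, v)\<leftarrow>coefs u. a * cnj (amp w (tcl v)))"
    unfolding ip_eq_sum_coefs_amp cnj_sum by simp
  also have "(\<Sum>(a, v)\<leftarrow>coefs u. a * cnj (amp w (tcl v))) = (\<Sum>X\<in>A0. amp u X * cnj (amp w X))"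
    unfolding amp_def by (rule sum_coefs_by_class) (auto simp: \<open>finite A0\<close> A0_def)
  also have "cnj \<dots> = (\<Sum>X\<in>A0. cnj (amp u X) * amp w X)" by simp
  also have "\<dots> = (\<Sum>X\<in>{X\<in>A0. amp u X \<noteq> 0}. cnj (amp u X) * amp w X)"
    by (rule sum.mono_neutral_right) (auto simp: \<open>finite A0\<close>)
  also have "\<dots> = (\<Sum>X\<in>A. cnj (amp u X) * amp w X)"
    by (rule sum.mono_neutral_left)
      (use assms amp_nonzero_imp_class[of u] in \<open>auto simp: A0_def\<close>)
  finally show ?thesis .
qed

lemma ip_resp_amp: "amp u = amp u' \<Longrightarrow> amp w = amp w' \<Longrightarrow> ip u w = ip u' w'"
  using ip_eq_sum_amp[OF finite_amp_support, of u] ip_eq_sum_amp[OF finite_amp_support, of u']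
  by auto

lemma ip_conj_sym: "ip u w = cnj (ip w u)"
proof -
  define A where "A = {X. amp u X \<noteq> 0} \<union> {X. amp w X \<noteq> 0}"
  have "finite A" by (simp add: A_def finite_amp_support)
  then show ?thesis
    using ip_eq_sum_amp[of A u w] ip_eq_sum_amp[of A w u] by (auto simp: A_def mult.commute)
qed

lemma ip_Plus_left: "ip (Plus u1 u2) w = ip u1 w + ip u2 w"
  by (simp add: ip_eq_sum_coefs_amp)

lemma ip_Scal_left: "ip (Scal c u) w = cnj c * ip u w"
proof -
  have "(\<Sum>(a, v)\<leftarrow>map (\<lambda>(b, t). (c * b, t)) xs. cnj a * g v) = cnj c * (\<Sum>(a, v)\<leftarrow>xs. cnj a * g v)"
    for xs :: "(complex \<times> tm) list" and g
    by (induction xs) (auto simp: algebra_simps)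
  then show ?thesis unfolding ip_eq_sum_coefs_amp coefs.simps .
qed

lemma ip_Plus_right: "ip u (Plus w1 w2) = ip u w1 + ip u w2"
proof -
  have "(\<Sum>(a, v)\<leftarrow>xs. cnj a * amp (Plus w1 w2) (tcl v))
      = (\<Sum>(a, v)\<leftarrow>xs. cnj a * amp w1 (tcl v)) + (\<Sum>(a, v)\<leftarrow>xs. cnj a * amp w2 (tcl v))"
    for xs :: "(complex \<times> tm) list"
    by (induction xs) (auto simp: algebra_simps)
  then show ?thesis unfolding ip_eq_sum_coefs_amp .
qed

lemma ip_Scal_right: "ip u (Scal c w) = c * ip u w"
proof -
  have "(\<Sum>(a, v)\<leftarrow>xs. cnj a * amp (Scal c w) (tcl v)) = c * (\<Sum>(a, v)\<leftarrow>xs. cnj a * amp w (tcl v))"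
    for xs :: "(complex \<times> tm) list"
    by (induction xs) (auto simp: algebra_simps)
  then show ?thesis unfolding ip_eq_sum_coefs_amp .
qed

lemma cnj_mult_self: "cnj z * z = complex_of_real ((cmod z)\<^sup>2)"
  by (metis complex_norm_square mult.commute)

lemma ip_self_nonneg_real: "\<exists>r. ip v v = complex_of_real r \<and> r \<ge> 0"
proof -
  have "ip v v = (\<Sum>X\<in>{X. amp v X \<noteq> 0}. cnj (amp v X) * amp v X)"
    by (rule ip_eq_sum_amp) (auto simp: finite_amp_support)
  also have "\<dots> = complex_of_real (\<Sum>X\<in>{X. amp v X \<noteq> 0}. (cmod (amp v X))\<^sup>2)"
    unfolding cnj_mult_self of_real_sum by simp
  finally show ?thesis
    by (intro exI[of _ "\<Sum>X\<in>{X. amp v X \<noteq> 0}. (cmod (amp v X))\<^sup>2"]) (auto intro: sum_nonneg)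
qed

lemma S1_ip_self: "v \<in> S1 \<Longrightarrow> ip v v = 1"
proof -
  assume "v \<in> S1"
  then have norm: "(cmod (ip v v))\<^sup>2 = 1" by (simp add: S1_def)
  obtain r where r: "ip v v = complex_of_real r" "r \<ge> 0" using ip_self_nonneg_real by blast
  then have "r\<^sup>2 = 1" using norm by simp
  then have "r = 1" using \<open>r \<ge> 0\<close> power2_eq_1_iff[of r] by auto
  then show ?thesis using r by simp
qed

lemma amp_nonzero_if_ip_self_one: "ip v v = 1 \<Longrightarrow> \<exists>X. amp v X \<noteq> 0"
  using ip_eq_sum_amp[of "{}" v v] by auto

lemma coefs_pairsp:
  "coefs (pairsp u w) = concat (map (\<lambda>(a, v). map (\<lambda>(b, v'). (a * b, Pair v v')) (coefs w)) (coefs u))"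
proof -
  have row: "concat (map coefs (map (\<lambda>(b, v'). Scal (a * b) (Tm (Pair v v'))) ys))
      = map (\<lambda>(b, v'). (a * b, Pair v v')) ys" for a v ys
    by (induction ys) auto
  have "coefs (sum_sp [Scal (a * b) (Tm (Pair v v')). (a, v) \<leftarrow> xs, (b, v') \<leftarrow> ys])
      = concat (map (\<lambda>(a, v). map (\<lambda>(b, v'). (a * b, Pair v v')) ys) xs)" for xs ys
    unfolding coefs_sum_sp
  proof (induction xs)
    case (Cons p xs)
    then show ?case using row[of "fst p" "snd p" ys] by (cases p) simp
  qed simp
  then show ?thesis unfolding pairsp_def .
qed

lemma sum_coefs_pairsp:
  "(\<Sum>(e, t)\<leftarrow>concat (map (\<lambda>(a, v). map (\<lambda>(b, v'). (a * b, Pair v v')) ys) xs). h e t)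
     = (\<Sum>(a, v)\<leftarrow>xs. \<Sum>(b, v')\<leftarrow>ys. h (a * b) (Pair v v'))"
proof (induction xs)
  case (Cons p xs)
  have "(\<Sum>(e, t)\<leftarrow>map (\<lambda>(b, v'). (fst p * b, Pair (snd p) v')) ys. h e t)
      = (\<Sum>(b, v')\<leftarrow>ys. h (fst p * b) (Pair (snd p) v'))"
    by (induction ys) auto
  then show ?case using Cons by (cases p) simp
qed simp

lemma sum_sum_product:
  "(\<Sum>(a, v)\<leftarrow>xs. \<Sum>(b, v')\<leftarrow>ys. f a v * g b v')
     = (\<Sum>(a, v)\<leftarrow>xs. f a v) * (\<Sum>(b, v')\<leftarrow>ys. (g b v' :: complex))"
proof (induction xs)
  case (Cons p xs)
  have "(\<Sum>(b, v')\<leftarrow>ys. f (fst p) (snd p) * g b v') = f (fst p) (snd p) * (\<Sum>(b, v')\<leftarrow>ys. g b v')"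
    by (induction ys) (auto simp: algebra_simps)
  then show ?case using Cons by (cases p) (simp add: algebra_simps)
qed simp

lemma amp_pairsp_Pair: "amp (pairsp u w) (tcl (Pair x y)) = amp u (tcl x) * amp w (tcl y)"
proof -
  have "amp (pairsp u w) (tcl (Pair x y))
      = (\<Sum>(a, v)\<leftarrow>coefs u. \<Sum>(b, v')\<leftarrow>coefs w.
           (if tcl v = tcl x then a else 0) * (if tcl v' = tcl y then b else 0))"
    unfolding amp_def coefs_pairsp sum_coefs_pairsp
    by (auto intro!: arg_cong[where f=sum_list] map_cong simp: tcl_Pair_eq_iff)
  also have "\<dots> = amp u (tcl x) * amp w (tcl y)" unfolding sum_sum_product amp_def by simp
  finally show ?thesis .
qed

lemma ip_pairsp: "ip (pairsp u w) (pairsp u' w') = ip u u' * ip w w'"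
proof -
  have "ip (pairsp u w) (pairsp u' w')
      = (\<Sum>(a, v)\<leftarrow>coefs u. \<Sum>(b, v')\<leftarrow>coefs w. (cnj a * amp u' (tcl v)) * (cnj b * amp w' (tcl v')))"
    unfolding ip_eq_sum_coefs_amp coefs_pairsp sum_coefs_pairsp
    by (auto intro!: arg_cong[where f=sum_list] map_cong simp: amp_pairsp_Pair algebra_simps)
  also have "\<dots> = ip u u' * ip w w'" unfolding sum_sum_product ip_eq_sum_coefs_amp by simp
  finally show ?thesis .
qed

lemma basis_coefs_pairsp: "is_value u \<Longrightarrow> is_value w \<Longrightarrow> basis_coefs (pairsp u w)"
  using value_basis_coefs[of u] value_basis_coefs[of w]
  unfolding basis_coefs_def coefs_pairsp by auto

fun kets :: "nat \<Rightarrow> tm set" where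
  "kets 0 = {Ket0, Ket1}"
| "kets (Suc 0) = {Ket0, Ket1}"
| "kets (Suc (Suc m)) = {Pair K t | K t. K \<in> {Ket0, Ket1} \<and> t \<in> kets (Suc m)}"

lemma kets_basis_closed_alg: "t \<in> kets m \<Longrightarrow> basis t \<and> closed_tm 0 t \<and> alg_tm t"
  by (induction m arbitrary: t rule: kets.induct) auto

lemma pairsp_single:
  "coefs u = [(1, x)] \<Longrightarrow> coefs w = [(1, y)] \<Longrightarrow> pairsp u w = Plus (Scal 1 (Tm (Pair x y))) Zero"
  by (simp add: pairsp_def sum_sp_def)

lemma sem_Bn_elem:
  "u \<in> sem (Bn m) \<tau> \<Longrightarrow> \<exists>t\<in>kets m. coefs u = [(1, t)] \<and> is_value u \<and> closed_sp 0 u \<and> alg_sp u"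
proof (induction m arbitrary: u rule: Bn.induct)
  case (3 m)
  then obtain K y where u: "u = pairsp (Tm K) y" "K \<in> {Ket0, Ket1}" "y \<in> sem (Bn (Suc m)) \<tau>"
    by auto
  obtain t where t: "t \<in> kets (Suc m)" "coefs y = [(1, t)]" using 3 u(3) by blast
  have "u = Plus (Scal 1 (Tm (Pair K t))) Zero" using u(1) t by (simp add: pairsp_single)
  then show ?case using u(2) t kets_basis_closed_alg[OF t(1)] by (auto intro!: bexI[of _ "Pair K t"])
qed auto

lemma sem_Bn_ex: "t \<in> kets m \<Longrightarrow> \<exists>u\<in>sem (Bn m) \<tau>. coefs u = [(1, t)]"
proof (induction m arbitrary: t rule: Bn.induct)
  case (3 m)
  then obtain K t' where t: "t = Pair K t'" "K \<in> {Ket0, Ket1}" "t' \<in> kets (Suc m)" by auto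
  obtain y where y: "y \<in> sem (Bn (Suc m)) \<tau>" "coefs y = [(1, t')]" using 3 t(3) by blast
  have "pairsp (Tm K) y \<in> sem (Bn (Suc (Suc m))) \<tau>" using t(2) y(1) by auto
  moreover have "coefs (pairsp (Tm K) y) = [(1, t)]" using y(2) t(1) by (simp add: pairsp_single)
  ultimately show ?case by blast
qed auto

lemma inj_on_tcl_kets: "inj_on tcl (kets m)"
proof (induction m rule: kets.induct)
  case (3 m)
  show ?case
  proof (rule inj_onI)
    fix a b assume "a \<in> kets (Suc (Suc m))" "b \<in> kets (Suc (Suc m))" "tcl a = tcl b"
    then obtain K t K' t' where ab: "a = Pair K t" "b = Pair K' t'" "K \<in> {Ket0, Ket1}"
      "K' \<in> {Ket0, Ket1}" "t \<in> kets (Suc m)" "t' \<in> kets (Suc m)" "tcl K = tcl K'" "tcl t = tcl t'"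
      by (auto simp: tcl_Pair_eq_iff)
    have "K = K'" using ab(3,4,7) by (auto simp: tcl_eq_iff dest: teq_Ket0_eq teq_Ket1_eq)
    moreover have "t = t'" using 3 ab(5,6,8) by (auto simp: inj_on_def)
    ultimately show "a = b" using ab by simp
  qed
qed (auto simp: inj_on_def tcl_eq_iff dest: teq_Ket0_eq teq_Ket1_eq)

lemma kets_not_teq: "t \<in> kets m \<Longrightarrow> t' \<in> kets m \<Longrightarrow> t \<noteq> t' \<Longrightarrow> \<not> teq t t'"
  using inj_on_tcl_kets[of m] by (auto simp: inj_on_def tcl_eq_iff[symmetric])

lemma card_kets: "m \<ge> 1 \<Longrightarrow> finite (kets m) \<and> card (kets m) = 2 ^ m"
proof (induction m rule: kets.induct)
  case (3 m)
  have "kets (Suc (Suc m)) = (\<lambda>(K, t). Pair K t) ` ({Ket0, Ket1} \<times> kets (Suc m))" by auto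
  moreover have "inj_on (\<lambda>(K, t). Pair K t) ({Ket0, Ket1} \<times> kets (Suc m))"
    by (auto simp: inj_on_def)
  ultimately show ?case using 3 by (simp add: card_image card_cartesian_product)
qed auto

lemma card_ket_classes: "m \<ge> 1 \<Longrightarrow> finite (tcl ` kets m) \<and> card (tcl ` kets m) = 2 ^ m"
  using card_kets card_image[OF inj_on_tcl_kets] by auto

lemma span_sem_Bn_amp_support: "v \<in> span (sem (Bn m) \<tau>) \<Longrightarrow> amp v X \<noteq> 0 \<Longrightarrow> X \<in> tcl ` kets m"
proof (induction rule: span.induct)
  case (span_gen u a)
  then obtain t where "t \<in> kets m" "coefs u = [(1, t)]" using sem_Bn_elem by blast
  then show ?case using span_gen by (auto simp: amp_def split: if_splits)
next
  case (span_plus u w)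
  then show ?case by (cases "amp u X = 0") auto
qed simp

lemma ip_single_kets:
  "coefs u = [(1, t)] \<Longrightarrow> coefs u' = [(1, t')] \<Longrightarrow> ip u u' = (if teq t t' then 1 else 0)"
  by (simp add: ip_def)

lemma ket_in_sharp:
  assumes "u \<in> sem (Bn m) \<tau>" "coefs u = [(1, t)]"
  shows "Scal 1 u \<in> sem (Sharp (Bn m)) \<tau>"
proof -
  have "Scal 1 u \<in> span (sem (Bn m) \<tau>)" by (intro span_gen assms(1))
  moreover have "is_value u \<and> closed_sp 0 u \<and> alg_sp u" using sem_Bn_elem[OF assms(1)] by auto
  moreover have "ip (Scal 1 u) (Scal 1 u) = 1"
    by (simp add: ip_Scal_left ip_Scal_right ip_single_kets[OF assms(2) assms(2)] teq_refl)
  ultimately show ?thesis by (simp add: S1_def)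
qed

lemma superposition_of_two_kets_in_sharp:
  assumes u: "u \<in> sem (Bn m) \<tau>" "coefs u = [(1, t)]"
    and u': "u' \<in> sem (Bn m) \<tau>" "coefs u' = [(1, t')]"
    and "\<not> teq t t'" and "algebraic \<alpha>" "algebraic \<beta>" and "cnj \<alpha> * \<alpha> + cnj \<beta> * \<beta> = 1"
  shows "Plus (Scal \<alpha> u) (Scal \<beta> u') \<in> sem (Sharp (Bn m)) \<tau>"
proof -
  have "Plus (Scal \<alpha> u) (Scal \<beta> u') \<in> span (sem (Bn m) \<tau>)"
    by (intro span_plus span_gen u(1) u'(1))
  moreover have "is_value u \<and> closed_sp 0 u \<and> alg_sp u" "is_value u' \<and> closed_sp 0 u' \<and> alg_sp u'"
    using sem_Bn_elem[OF u(1)] sem_Bn_elem[OF u'(1)] by auto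
  moreover have "\<not> teq t' t" using \<open>\<not> teq t t'\<close> teq_sym by blast
  then have "ip (Plus (Scal \<alpha> u) (Scal \<beta> u')) (Plus (Scal \<alpha> u) (Scal \<beta> u')) = cnj \<alpha> * \<alpha> + cnj \<beta> * \<beta>"
    using \<open>\<not> teq t t'\<close>
    by (simp add: ip_Plus_left ip_Plus_right ip_Scal_left ip_Scal_right teq_refl
        ip_single_kets[OF u(2) u(2)] ip_single_kets[OF u(2) u'(2)]
        ip_single_kets[OF u'(2) u(2)] ip_single_kets[OF u'(2) u'(2)])
  ultimately show ?thesis using assms(6-8) by (simp add: S1_def)
qed

lemma algebraic_4i_div_5: "algebraic (4 * \<i> / 5)"
proof (rule algebraicI'[of "[:16, 0, 25:]"])
  show "\<And>i. coeff [:16, 0, 25:] i \<in> \<rat>" by (simp add: coeff_pCons split: nat.splits)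
  show "[:16, 0, 25:] \<noteq> (0::complex poly)" by simp
  show "poly [:16, 0, 25:] (4 * \<i> / 5) = 0" by (simp add: algebra_simps power2_eq_square)
qed

section \<open>Finite-dimensional linear algebra\<close>

lemma bessel_inequality_coordinate:
  fixes f :: "'i \<Rightarrow> 'd \<Rightarrow> complex"
  assumes "finite I" "finite D" "d \<in> D"
    and orth: "\<And>i j. i \<in> I \<Longrightarrow> j \<in> I \<Longrightarrow> (\<Sum>Y\<in>D. cnj (f i Y) * f j Y) = (if i = j then 1 else 0)"
  shows "(\<Sum>i\<in>I. (cmod (f i d))\<^sup>2) \<le> 1"
proof -
  define S where "S = (\<Sum>i\<in>I. (cmod (f i d))\<^sup>2)"
  \<comment> \<open>\<open>u\<close> is the projection of the \<open>d\<close>-th unit vector onto the span of the family.\<close>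
  define u where "u Y = (\<Sum>i\<in>I. cnj (f i d) * f i Y)" for Y
  have "(\<Sum>Y\<in>D. cnj (u Y) * u Y)
      = (\<Sum>Y\<in>D. \<Sum>i\<in>I. \<Sum>j\<in>I. (f j d * cnj (f i d)) * (cnj (f j Y) * f i Y))"
    unfolding u_def by (simp add: sum_product algebra_simps)
  also have "\<dots> = (\<Sum>i\<in>I. \<Sum>j\<in>I. (f j d * cnj (f i d)) * (\<Sum>Y\<in>D. cnj (f j Y) * f i Y))"
    by (simp add: sum_distrib_left sum.swap[of _ D])
  also have "\<dots> = (\<Sum>i\<in>I. \<Sum>j\<in>I. if i = j then f j d * cnj (f i d) else 0)"
    using orth by (intro sum.cong refl) auto
  also have "\<dots> = (\<Sum>i\<in>I. f i d * cnj (f i d))" using \<open>finite I\<close> by simp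
  also have "\<dots> = complex_of_real S"
    unfolding S_def of_real_sum by (intro sum.cong refl) (metis complex_norm_square)
  finally have "(\<Sum>Y\<in>D. (cmod (u Y))\<^sup>2) = S"
    unfolding cnj_mult_self of_real_sum[symmetric] of_real_eq_iff .
  moreover have "(cmod (u d))\<^sup>2 \<le> (\<Sum>Y\<in>D. (cmod (u Y))\<^sup>2)"
    by (rule member_le_sum) (use assms in auto)
  moreover have "u d = complex_of_real S"
    unfolding u_def S_def of_real_sum by (simp add: cnj_mult_self)
  moreover have "S \<ge> 0" by (simp add: S_def sum_nonneg)
  ultimately have "S * S \<le> S * 1" by (simp add: power2_eq_square)
  then show ?thesis unfolding S_def[symmetric] using \<open>S \<ge> 0\<close>
    by (cases "S = 0") (auto simp: mult_le_cancel_left)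
qed

lemma orthonormal_family_card_le:
  fixes f :: "'i \<Rightarrow> 'd \<Rightarrow> complex"
  assumes "finite I" "finite D"
    and orth: "\<And>i j. i \<in> I \<Longrightarrow> j \<in> I \<Longrightarrow> (\<Sum>Y\<in>D. cnj (f i Y) * f j Y) = (if i = j then 1 else 0)"
  shows "card I \<le> card D"
proof -
  have unit: "(\<Sum>Y\<in>D. (cmod (f i Y))\<^sup>2) = 1" if "i \<in> I" for i
  proof -
    have "complex_of_real (\<Sum>Y\<in>D. (cmod (f i Y))\<^sup>2) = 1"
      using orth[OF that that] unfolding of_real_sum by (simp add: cnj_mult_self)
    then show ?thesis using of_real_eq_1_iff by blast
  qed
  have "real (card I) = (\<Sum>i\<in>I. \<Sum>Y\<in>D. (cmod (f i Y))\<^sup>2)" using unit by simp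
  also have "\<dots> = (\<Sum>Y\<in>D. \<Sum>i\<in>I. (cmod (f i Y))\<^sup>2)" by (rule sum.swap)
  also have "\<dots> \<le> (\<Sum>Y\<in>D. 1)"
    by (rule sum_mono) (use bessel_inequality_coordinate[OF assms(1,2) _ orth] in auto)
  finally show ?thesis by simp
qed

definition proportional :: "('d \<Rightarrow> complex) \<Rightarrow> ('d \<Rightarrow> complex) \<Rightarrow> bool" where
  "proportional f g \<longleftrightarrow> (\<forall>X Y. f X * g Y = g X * f Y)"

lemma proportional_refl: "proportional f f"
  by (simp add: proportional_def mult.commute)

lemma proportional_sym: "proportional f g \<Longrightarrow> proportional g f"
  unfolding proportional_def by (metis mult.commute)

lemma proportional_trans:
  assumes "proportional f g" "proportional g h" "g Z \<noteq> 0"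
  shows "proportional f h"
  unfolding proportional_def
proof (intro allI)
  fix X Y
  have fg: "f X * g Z = g X * f Z" "f Y * g Z = g Y * f Z"
    and gh: "g Z * h Y = h Z * g Y" "g Z * h X = h Z * g X"
    using assms(1,2) unfolding proportional_def by auto
  have "(f X * h Y) * (g Z * g Z) = (f X * g Z) * (g Z * h Y)" by (simp add: algebra_simps)
  also have "\<dots> = (g X * f Z) * (h Z * g Y)" using fg gh by simp
  also have "\<dots> = (f Y * g Z) * (g Z * h X)" using fg gh by (simp add: algebra_simps)
  also have "\<dots> = (h X * f Y) * (g Z * g Z)" by (simp add: algebra_simps)
  finally show "f X * h Y = h X * f Y" using assms(3) by simp
qed

lemma proportional_inner_product:
  assumes "proportional f g"
  shows "(\<Sum>Y\<in>D. cnj (f Y) * g Y) * cnj (\<Sum>Y\<in>D. cnj (f Y) * g Y)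
       = (\<Sum>Y\<in>D. cnj (f Y) * f Y) * (\<Sum>Y\<in>D. cnj (g Y) * g Y)"
proof -
  have "(\<Sum>Y\<in>D. cnj (f Y) * g Y) * cnj (\<Sum>Y\<in>D. cnj (f Y) * g Y)
      = (\<Sum>Y\<in>D. \<Sum>Y'\<in>D. cnj (f Y') * (g Y' * f Y) * cnj (g Y))"
    by (simp add: sum_product algebra_simps)
  also have "\<dots> = (\<Sum>Y\<in>D. \<Sum>Y'\<in>D. cnj (f Y') * (f Y' * g Y) * cnj (g Y))"
    using assms unfolding proportional_def by simp
  also have "\<dots> = (\<Sum>Y\<in>D. cnj (f Y) * f Y) * (\<Sum>Y\<in>D. cnj (g Y) * g Y)"
    by (subst sum.swap) (simp add: sum_product algebra_simps)
  finally show ?thesis .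
qed

text \<open>If \<open>a \<otimes> b = \<alpha> p \<otimes> q + \<beta> P \<otimes> Q\<close>, the \<open>2\<times>2\<close> minors of the right-hand side vanish, and they
  factor as \<open>\<alpha>\<beta>\<close> times a minor of \<open>(p, P)\<close> times a minor of \<open>(q, Q)\<close>.\<close>

lemma product_of_minors_zero:
  fixes a b a' b' p p' q q' P P' Q Q' \<alpha> \<beta> :: complex
  assumes "\<alpha> \<noteq> 0" "\<beta> \<noteq> 0"
    and "a * b = \<alpha> * p * q + \<beta> * P * Q" "a' * b' = \<alpha> * p' * q' + \<beta> * P' * Q'"
    and "a * b' = \<alpha> * p * q' + \<beta> * P * Q'" "a' * b = \<alpha> * p' * q + \<beta> * P' * Q"
  shows "(p * P' - P * p') * (q * Q' - Q * q') = 0"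
proof -
  have "(a * b) * (a' * b') - (a * b') * (a' * b) = 0" by (simp add: algebra_simps)
  then have "(\<alpha> * p * q + \<beta> * P * Q) * (\<alpha> * p' * q' + \<beta> * P' * Q')
      - (\<alpha> * p * q' + \<beta> * P * Q') * (\<alpha> * p' * q + \<beta> * P' * Q) = 0"
    using assms(3-6) by simp
  then have "(\<alpha> * \<beta>) * ((p * P' - P * p') * (q * Q' - Q * q')) = 0" by (simp add: algebra_simps)
  then show ?thesis using assms(1,2) by simp
qed

lemma equivalences_covering_imp_total:
  assumes "\<And>i. i \<in> I \<Longrightarrow> P i i" "\<And>i j. i \<in> I \<Longrightarrow> j \<in> I \<Longrightarrow> P i j \<Longrightarrow> P j i"
    "\<And>i j k. i \<in> I \<Longrightarrow> j \<in> I \<Longrightarrow> k \<in> I \<Longrightarrow> P i j \<Longrightarrow> P j k \<Longrightarrow> P i k"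
    "\<And>i. i \<in> I \<Longrightarrow> Q i i" "\<And>i j. i \<in> I \<Longrightarrow> j \<in> I \<Longrightarrow> Q i j \<Longrightarrow> Q j i"
    "\<And>i j k. i \<in> I \<Longrightarrow> j \<in> I \<Longrightarrow> k \<in> I \<Longrightarrow> Q i j \<Longrightarrow> Q j k \<Longrightarrow> Q i k"
    "\<And>i j. i \<in> I \<Longrightarrow> j \<in> I \<Longrightarrow> P i j \<or> Q i j"
  shows "(\<forall>i\<in>I. \<forall>j\<in>I. P i j) \<or> (\<forall>i\<in>I. \<forall>j\<in>I. Q i j)"
proof (rule ccontr)
  assume "\<not> ?thesis"
  then obtain a b c d where abcd: "a \<in> I" "b \<in> I" "c \<in> I" "d \<in> I" "\<not> P a b" "\<not> Q c d" by blast
  then have "Q a b" "P c d" using assms(7) by blast+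
  show False
  proof (cases "P a c")
    case True
    then have "P a d" using assms(3) abcd \<open>P c d\<close> by blast
    have "\<not> P b c" using assms(2,3) abcd True by blast
    then have "Q b c" using assms(7) abcd by blast
    have "\<not> P b d" using assms(2,3) abcd \<open>P a d\<close> by blast
    then have "Q b d" using assms(7) abcd by blast
    then show False using assms(5,6) abcd \<open>Q b c\<close> by blast
  next
    case False
    then have "Q a c" using assms(7) abcd by blast
    have "\<not> P a d" using assms(2,3) abcd False \<open>P c d\<close> by blast
    then have "Q a d" using assms(7) abcd by blast
    then show False using assms(5,6) abcd \<open>Q a c\<close> by blast
  qed
qed

definition orthonormal :: "('i \<Rightarrow> sp) \<Rightarrow> 'i set \<Rightarrow> bool" where
  "orthonormal F I \<longleftrightarrow> (\<forall>i\<in>I. \<forall>j\<in>I. ip (F i) (F j) = (if i = j then 1 else 0))"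

lemma orthonormal_in_span_Bn_card_le:
  assumes "finite I" "m \<ge> 1" "\<forall>i\<in>I. F i \<in> span (sem (Bn m) \<tau>)" "orthonormal F I"
  shows "card I \<le> 2 ^ m"
proof -
  have "finite (tcl ` kets m)" "card (tcl ` kets m) = 2 ^ m" using card_ket_classes[OF assms(2)] by auto
  moreover have "card I \<le> card (tcl ` kets m)"
  proof (rule orthonormal_family_card_le[OF assms(1) \<open>finite (tcl ` kets m)\<close>])
    fix i j assume "i \<in> I" "j \<in> I"
    have "ip (F i) (F j) = (\<Sum>X\<in>tcl ` kets m. cnj (amp (F i) X) * amp (F j) X)"
      by (rule ip_eq_sum_amp) (use \<open>finite (tcl ` kets m)\<close> span_sem_Bn_amp_support assms(3) \<open>i \<in> I\<close> in auto)
    then show "(\<Sum>X\<in>tcl ` kets m. cnj (amp (F i) X) * amp (F j) X) = (if i = j then 1 else 0)"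
      using assms(4) \<open>i \<in> I\<close> \<open>j \<in> I\<close> by (simp add: orthonormal_def)
  qed
  ultimately show ?thesis by simp
qed

lemma ip_nonzero_if_proportional:
  assumes "proportional (amp u) (amp v)" "ip u u = 1" "ip v v = 1"
  shows "ip u v \<noteq> 0"
proof -
  define D where "D = {X. amp u X \<noteq> 0} \<union> {X. amp v X \<noteq> 0}"
  have "finite D" by (simp add: D_def finite_amp_support)
  have ip_D: "ip w w' = (\<Sum>X\<in>D. cnj (amp w X) * amp w' X)" if "w \<in> {u, v}" for w w'
    by (rule ip_eq_sum_amp) (use that \<open>finite D\<close> in \<open>auto simp: D_def\<close>)
  have "ip u v * cnj (ip u v) = ip u u * ip v v"
    using proportional_inner_product[OF assms(1), of D] ip_D[of u v] ip_D[of u u] ip_D[of v v] by simp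
  then show ?thesis using assms(2,3) by auto
qed

text \<open>The squared norm of \<open>3/5 x + \<beta> y\<close> for unit vectors \<open>x, y\<close> with \<open>\<langle>x|y\<rangle> = z\<close>: if it is \<open>1\<close> for
  the two phases \<open>\<beta> = 4/5\<close> and \<open>\<beta> = 4i/5\<close>, then both the real and the imaginary part of \<open>z\<close>
  vanish.\<close>

lemma cross_term_zero:
  fixes z :: complex
  assumes "\<And>\<beta>. \<beta> = 4/5 \<or> \<beta> = 4*\<i>/5 \<Longrightarrow> (3/5)*(3/5) + (3/5)*\<beta>*z + cnj \<beta>*(3/5)*cnj z + cnj \<beta>*\<beta> = 1"
  shows "z = 0"
  using assms[of "4/5"] assms[of "4*\<i>/5"] by (simp add: complex_eq_iff algebra_simps)

section \<open>A term of the type would split an entangled space\<close>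

locale splitting_term =
  fixes b :: sp and n k :: nat
  assumes inhabits: "Tm (Lam b) \<in> sem (Lolli (Sharp (Bn (n + k))) (Prod (Sharp (Bn n)) (Sharp (Bn k)))) empty_env"
begin

lemma output_is_product:
  assumes "s \<in> sem (Sharp (Bn (n + k))) empty_env"
  shows "\<exists>m V W. V \<in> sem (Sharp (Bn n)) empty_env \<and> W \<in> sem (Sharp (Bn k)) empty_env \<and>
     amp ((lin_step ^^ m) (spmap (App (Lam b)) s)) = amp (pairsp V W)"
proof -
  have "spmap (App (Lam b)) s \<turnstile>r sem (Prod (Sharp (Bn n)) (Sharp (Bn k))) empty_env"
    using inhabits assms by auto
  then obtain w V W where w: "sreds (spmap (App (Lam b)) s) w" "speq w (pairsp V W)"
    "V \<in> sem (Sharp (Bn n)) empty_env" "W \<in> sem (Sharp (Bn k)) empty_env"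
    unfolding realizes_def by auto
  obtain m where "amp w = amp ((lin_step ^^ m) (spmap (App (Lam b)) s))"
    using sreds_amp_lin_step[OF w(1)] by blast
  then show ?thesis using speq_imp_amp_eq[OF w(2)] w(3,4) by metis
qed

definition ket :: "tm \<Rightarrow> sp" where
  "ket t = (SOME u. u \<in> sem (Bn (n + k)) empty_env \<and> coefs u = [(1, t)])"

lemma ket: "t \<in> kets (n + k) \<Longrightarrow> ket t \<in> sem (Bn (n + k)) empty_env \<and> coefs (ket t) = [(1, t)]"
  unfolding ket_def by (rule someI_ex) (use sem_Bn_ex in blast)

definition applied :: "tm \<Rightarrow> sp" where
  "applied t = spmap (App (Lam b)) (ket t)"

definition basis_output :: "tm \<Rightarrow> nat \<times> sp \<times> sp" where
  "basis_output t = (SOME (M, P, Q). P \<in> sem (Sharp (Bn n)) empty_env \<and> Q \<in> sem (Sharp (Bn k)) empty_env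
     \<and> (\<forall>M'\<ge>M. amp ((lin_step ^^ M') (applied t)) = amp (pairsp P Q)))"

definition settling_time :: "tm \<Rightarrow> nat" where "settling_time t = fst (basis_output t)"
definition first_factor :: "tm \<Rightarrow> sp" where "first_factor t = fst (snd (basis_output t))"
definition second_factor :: "tm \<Rightarrow> sp" where "second_factor t = snd (snd (basis_output t))"

lemma basis_output:
  assumes "t \<in> kets (n + k)"
  shows "first_factor t \<in> sem (Sharp (Bn n)) empty_env" "second_factor t \<in> sem (Sharp (Bn k)) empty_env"
    "\<And>M. M \<ge> settling_time t \<Longrightarrow> amp ((lin_step ^^ M) (applied t)) = amp (pairsp (first_factor t) (second_factor t))"
proof -
  have "Scal 1 (ket t) \<in> sem (Sharp (Bn (n + k))) empty_env" using ket[OF assms] ket_in_sharp by blast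
  from output_is_product[OF this] obtain m P Q where PQ: "P \<in> sem (Sharp (Bn n)) empty_env"
    "Q \<in> sem (Sharp (Bn k)) empty_env" "amp ((lin_step ^^ m) (Scal 1 (applied t))) = amp (pairsp P Q)"
    by (auto simp: applied_def)
  have "amp (Scal 1 (applied t)) = amp (applied t)" by (auto intro!: ext)
  then have "amp ((lin_step ^^ m) (applied t)) = amp (pairsp P Q)"
    using funpow_lin_step_resp_amp PQ(3) by metis
  moreover have "basis_coefs (pairsp P Q)" using PQ(1,2) by (intro basis_coefs_pairsp) (auto simp: S1_def)
  ultimately have "\<forall>M'\<ge>m. amp ((lin_step ^^ M') (applied t)) = amp (pairsp P Q)"
    using funpow_lin_step_stable by blast
  then have "\<exists>x. (\<lambda>(M, P, Q). P \<in> sem (Sharp (Bn n)) empty_env \<and> Q \<in> sem (Sharp (Bn k)) empty_env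
     \<and> (\<forall>M'\<ge>M. amp ((lin_step ^^ M') (applied t)) = amp (pairsp P Q))) x"
    using PQ(1,2) by blast
  from someI_ex[OF this] show "first_factor t \<in> sem (Sharp (Bn n)) empty_env"
    "second_factor t \<in> sem (Sharp (Bn k)) empty_env"
    "\<And>M. M \<ge> settling_time t \<Longrightarrow> amp ((lin_step ^^ M) (applied t)) = amp (pairsp (first_factor t) (second_factor t))"
    unfolding basis_output_def[symmetric] settling_time_def first_factor_def second_factor_def
    by (auto split: prod.splits)
qed

lemma factors_unit:
  assumes "t \<in> kets (n + k)"
  shows "ip (first_factor t) (first_factor t) = 1" "ip (second_factor t) (second_factor t) = 1"
  using basis_output(1,2)[OF assms] by (auto intro: S1_ip_self)

text \<open>By linearity, the output on \<open>3/5|t\<rangle> + \<beta>|t'\<rangle>\<close> is the corresponding combination of the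
  outputs on \<open>|t\<rangle>\<close> and \<open>|t'\<rangle>\<close>; being an output, it is also a product.\<close>

lemma output_of_superposition:
  assumes t: "t \<in> kets (n + k)" "t' \<in> kets (n + k)" "t \<noteq> t'" and \<beta>: "\<beta> = 4/5 \<or> \<beta> = 4*\<i>/5"
  shows "\<exists>V W. V \<in> sem (Sharp (Bn n)) empty_env \<and> W \<in> sem (Sharp (Bn k)) empty_env \<and>
     amp (pairsp V W) = amp (Plus (Scal (3/5) (pairsp (first_factor t) (second_factor t)))
                                  (Scal \<beta> (pairsp (first_factor t') (second_factor t'))))"
proof -
  have "algebraic (4/5 :: complex)" by (simp add: rat_imp_algebraic)
  then have "algebraic \<beta>" using \<beta> algebraic_4i_div_5 by metis
  moreover have "cnj (3/5) * (3/5) + cnj \<beta> * \<beta> = 1"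
    using \<beta> by (elim disjE) (simp only:; simp add: algebra_simps)+
  ultimately have "Plus (Scal (3/5) (ket t)) (Scal \<beta> (ket t')) \<in> sem (Sharp (Bn (n + k))) empty_env"
    using ket[OF t(1)] ket[OF t(2)] kets_not_teq[OF t]
    by (intro superposition_of_two_kets_in_sharp) (auto intro: rat_imp_algebraic)
  from output_is_product[OF this] obtain m V W where VW: "V \<in> sem (Sharp (Bn n)) empty_env"
    "W \<in> sem (Sharp (Bn k)) empty_env"
    "amp ((lin_step ^^ m) (Plus (Scal (3/5) (applied t)) (Scal \<beta> (applied t')))) = amp (pairsp V W)"
    by (auto simp: applied_def)
  define M where "M = max m (max (settling_time t) (settling_time t'))"
  have "basis_coefs (pairsp V W)" using VW(1,2) by (intro basis_coefs_pairsp) (auto simp: S1_def)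
  then have "amp ((lin_step ^^ M) (Plus (Scal (3/5) (applied t)) (Scal \<beta> (applied t')))) = amp (pairsp V W)"
    using funpow_lin_step_stable[OF VW(3)] by (simp add: M_def)
  then show ?thesis
    using VW(1,2) basis_output(3)[OF t(1), of M] basis_output(3)[OF t(2), of M]
    unfolding amp_funpow_lin_step_lincomb by (auto simp: M_def fun_eq_iff)
qed

lemma outputs_orthogonal:
  assumes t: "t \<in> kets (n + k)" "t' \<in> kets (n + k)" "t \<noteq> t'"
  shows "ip (first_factor t) (first_factor t') * ip (second_factor t) (second_factor t') = 0"
proof -
  define x where "x = pairsp (first_factor t) (second_factor t)"
  define y where "y = pairsp (first_factor t') (second_factor t')"
  have "ip x x = 1" "ip y y = 1" using factors_unit t by (simp_all add: x_def y_def ip_pairsp)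
  have "(3/5)*(3/5) + (3/5)*\<beta>*ip x y + cnj \<beta>*(3/5)*cnj (ip x y) + cnj \<beta>*\<beta> = 1"
    if \<beta>: "\<beta> = 4/5 \<or> \<beta> = 4*\<i>/5" for \<beta>
  proof -
    obtain V W where VW: "V \<in> sem (Sharp (Bn n)) empty_env" "W \<in> sem (Sharp (Bn k)) empty_env"
      "amp (pairsp V W) = amp (Plus (Scal (3/5) x) (Scal \<beta> y))"
      using output_of_superposition[OF t \<beta>] by (auto simp: x_def y_def)
    have "ip (pairsp V W) (pairsp V W) = 1" using VW(1,2) by (simp add: ip_pairsp S1_ip_self)
    then have "ip (Plus (Scal (3/5) x) (Scal \<beta> y)) (Plus (Scal (3/5) x) (Scal \<beta> y)) = 1"
      using ip_resp_amp[OF VW(3) VW(3)] by simp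
    then show ?thesis
      using \<open>ip x x = 1\<close> \<open>ip y y = 1\<close> ip_conj_sym[of y x]
      by (simp add: ip_Plus_left ip_Plus_right ip_Scal_left ip_Scal_right algebra_simps)
  qed
  then have "ip x y = 0" by (rule cross_term_zero)
  then show ?thesis by (simp add: x_def y_def ip_pairsp)
qed

lemma factors_proportional:
  assumes t: "t \<in> kets (n + k)" "t' \<in> kets (n + k)" "t \<noteq> t'"
  shows "proportional (amp (first_factor t)) (amp (first_factor t'))
       \<or> proportional (amp (second_factor t)) (amp (second_factor t'))"
proof -
  define p where "p s = amp (first_factor s)" for s
  define q where "q s = amp (second_factor s)" for s
  obtain V W where VW: "amp (pairsp V W) = amp (Plus (Scal (3/5) (pairsp (first_factor t) (second_factor t)))
      (Scal (4/5) (pairsp (first_factor t') (second_factor t'))))"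
    using output_of_superposition[OF t, of "4/5"] by auto
  have coord: "amp V (tcl x) * amp W (tcl y) = 3/5 * p t (tcl x) * q t (tcl y) + 4/5 * p t' (tcl x) * q t' (tcl y)"
    for x y
    using fun_cong[OF VW, of "tcl (Pair x y)"] by (simp add: amp_pairsp_Pair p_def q_def algebra_simps)
  have minors: "(p t X * p t' X' - p t' X * p t X') * (q t Y * q t' Y' - q t' Y * q t Y') = 0" for X X' Y Y'
    using product_of_minors_zero[OF _ _ coord[of "class_rep X" "class_rep Y"]
        coord[of "class_rep X'" "class_rep Y'"] coord[of "class_rep X" "class_rep Y'"]
        coord[of "class_rep X'" "class_rep Y"]]
    by (simp add: tcl_class_rep)
  show ?thesis
  proof (cases "proportional (p t) (p t')")
    case False
    then obtain X X' where "p t X * p t' X' - p t' X * p t X' \<noteq> 0"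
      unfolding proportional_def by auto
    then have "proportional (q t) (q t')" using minors[of X X'] unfolding proportional_def by auto
    then show ?thesis by (simp add: q_def)
  qed (simp add: p_def)
qed

lemma one_factor_family_orthonormal:
  "orthonormal second_factor (kets (n + k)) \<or> orthonormal first_factor (kets (n + k))"
proof -
  let ?I = "kets (n + k)"
  have nonzero: "\<exists>Z. amp (first_factor t) Z \<noteq> 0" "\<exists>Z. amp (second_factor t) Z \<noteq> 0" if "t \<in> ?I" for t
    using amp_nonzero_if_ip_self_one factors_unit[OF that] by auto
  have "(\<forall>t\<in>?I. \<forall>t'\<in>?I. proportional (amp (first_factor t)) (amp (first_factor t')))
      \<or> (\<forall>t\<in>?I. \<forall>t'\<in>?I. proportional (amp (second_factor t)) (amp (second_factor t')))"
    by (rule equivalences_covering_imp_total)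
      (use nonzero factors_proportional proportional_refl proportional_sym proportional_trans in metis)+
  then show ?thesis
  proof
    assume "\<forall>t\<in>?I. \<forall>t'\<in>?I. proportional (amp (first_factor t)) (amp (first_factor t'))"
    then have "ip (first_factor t) (first_factor t') \<noteq> 0" if "t \<in> ?I" "t' \<in> ?I" for t t'
      using that factors_unit by (intro ip_nonzero_if_proportional) auto
    then show ?thesis
      unfolding orthonormal_def using outputs_orthogonal factors_unit by auto
  next
    assume "\<forall>t\<in>?I. \<forall>t'\<in>?I. proportional (amp (second_factor t)) (amp (second_factor t'))"
    then have "ip (second_factor t) (second_factor t') \<noteq> 0" if "t \<in> ?I" "t' \<in> ?I" for t t'
      using that factors_unit by (intro ip_nonzero_if_proportional) auto
    then show ?thesis
      unfolding orthonormal_def using outputs_orthogonal factors_unit by auto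
  qed
qed

end

theorem mainTheorem4:
  fixes n k :: nat and b :: sp
  assumes "n \<ge> 1" and "k \<ge> 1"
    and "closed_tm 0 (Lam b)" and "alg_tm (Lam b)"
  shows "Tm (Lam b) \<notin> sem (Lolli (Sharp (Bn (n + k))) (Prod (Sharp (Bn n)) (Sharp (Bn k)))) empty_env"
proof
  assume "Tm (Lam b) \<in> sem (Lolli (Sharp (Bn (n + k))) (Prod (Sharp (Bn n)) (Sharp (Bn k)))) empty_env"
  then interpret splitting_term b n k by unfold_locales
  have "finite (kets (n + k))" and card: "card (kets (n + k)) = 2 ^ (n + k)"
    using card_kets[of "n + k"] assms(1) by auto
  have "2 ^ n < (2::nat) ^ (n + k)" "2 ^ k < (2::nat) ^ (n + k)" using assms(1,2) by simp_all
  from one_factor_family_orthonormal show False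
  proof
    assume "orthonormal second_factor (kets (n + k))"
    then have "card (kets (n + k)) \<le> 2 ^ k"
      using \<open>finite (kets (n + k))\<close> assms(2) basis_output(2)
      by (intro orthonormal_in_span_Bn_card_le[where \<tau> = empty_env]) auto
    then show False using card \<open>2 ^ k < 2 ^ (n + k)\<close> by simp
  next
    assume "orthonormal first_factor (kets (n + k))"
    then have "card (kets (n + k)) \<le> 2 ^ n"
      using \<open>finite (kets (n + k))\<close> assms(1) basis_output(1)
      by (intro orthonormal_in_span_Bn_card_le[where \<tau> = empty_env]) auto
    then show False using card \<open>2 ^ n < 2 ^ (n + k)\<close> by simp
  qed
qed

end
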